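(* Assume conditions (C1)–(C6) and fix $\zeta\in\Theta$. Let $\varphi_\zeta$ be the bounded solution of the network $(N_\zeta)$ on $\mathbb T_0$ defined below. Then for every $t^0\in\mathbb T_0$ and every solution $x$ of $(N_\zeta)$ on $\mathbb T_0\cap[t^0,\infty)$ one has $\|x(t)-\varphi_\zeta(t)\|\to0$ as $t\to\infty$, $t\in\mathbb T_0$.
   Context: Fix integers $m,n\ge1$ and $r\ge0$. Cells are indexed by pairs $(i,j)$, $1\le i\le m$, $1\le j\le n$. The $r$-neighbourhood of $(i,j)$ is $N_r(i,j)=\{(h,l):1\le h\le m,\ 1\le l\le n,\ \max(|h-i|,|l-j|)\le r\}$. Fix constants $a_{ij}>0$, $C^{hl}_{ij}\ge0$, and a continuous function $f:\mathbb R\to\mathbb R$. Vectors of $\mathbb R^{mn}$ are written $v=\{v_{ij}\}$, with norm $\|v\|=\max_{(i,j)}|v_{ij}|$. Time scale: $\{\theta_k\}_{k\in\mathbb Z}$ is strictly increasing, $\theta_{-1}<0<\theta_0$, and there exist $\omega>0$ and $p\in\mathbb N$ with $\theta_{k+2p}=\theta_k+\omega$ for all $k$. Set $\mathbb T_0=\bigcup_{k\in\mathbb Z}[\theta_{2k-1},\theta_{2k}]$, $\delta_k=\theta_{2k+1}-\theta_{2k}$, $\eta_k=\theta_{2k}-\theta_{2k-1}$ (both $p$-periodic in $k$), $\delta=\max_{1\le k\le p}\delta_k$. On $\mathbb T_0'=\mathbb T_0\setminus\{\theta_{2k-1}:k\in\mathbb Z\}$ define $\psi(t)=t-\sum_{0<\theta_{2k}<t}\delta_k$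 for $t\ge0$ and $\psi(t)=t+\sum_{t\le\theta_{2k}<0}\delta_k$ for $t<0$; put $s_k=\psi(\theta_{2k})$, so $s_k-s_{k-1}=\eta_k$, and write $\psi(\omega):=\omega-\sum_{k=1}^p\delta_k=\sum_{k=1}^p\eta_k$, so $s_{k+p}=s_k+\psi(\omega)$. Inputs: $\Lambda\subset\mathbb R^{mn}$ is compact and $F:\Lambda\to\Lambda$ is continuous. $\Theta$ is the set of all sequences $\zeta=\{\zeta_k\}_{k\in\mathbb Z}$, $\zeta_k=\{\zeta^{ij}_k\}\in\Lambda$, with $\zeta_{k+1}=F(\zeta_k)$ for all $k\in\mathbb Z$. For $\zeta\in\Theta$, $L_{ij}(t,\zeta)=\zeta^{ij}_k$ for $t\in[\theta_{2k-1},\theta_{2k}]$. Network $(N_\zeta)$ on $\mathbb T_0$: $x^\Delta_{ij}(t)=-a_{ij}x_{ij}(t)-\sum_{(h,l)\in N_r(i,j)}C^{hl}_{ij}f(x_{hl}(t))x_{ij}(t)+L_{ij}(t,\zeta)$, $t\in\mathbb T_0$, where the $\Delta$-derivative at $\theta_{2k}$ is $(x(\theta_{2k+1})-x(\theta_{2k}))/\delta_k$ and elsewhere the ordinary derivative. Concretely, a solution on $\mathbb T_0$ (or on $\mathbb T_0\cap[t^0,\infty)$) is a function continuous and (one-sidedly at endpoints) differentiable on each interval $[\theta_{2k-1},\theta_{2k}]$ of its domain satisfying there $x_{ij}'=-a_{ij}x_{ij}-\sum_{(h,l)\in N_r(i,j)}C^{hl}_{ij}f(x_{hl})x_{ij}+\zeta^{ij}_k$,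 together with $x_{ij}(\theta_{2k+1})=(1-\delta_ka_{ij})x_{ij}(\theta_{2k})-\delta_k\sum_{(h,l)\in N_r(i,j)}C^{hl}_{ij}f(x_{hl}(\theta_{2k}))x_{ij}(\theta_{2k})+\delta_k\zeta^{ij}_k$. Impulsive system $(I_\zeta)$: for $s\in(s_{k-1},s_k)$, $y_{ij}'(s)=-a_{ij}y_{ij}(s)-\sum_{(h,l)\in N_r(i,j)}C^{hl}_{ij}f(y_{hl}(s))y_{ij}(s)+\zeta^{ij}_k$, and at $s=s_k$, $y_{ij}(s_k+)-y_{ij}(s_k)=-\delta_ka_{ij}y_{ij}(s_k)-\delta_k\sum_{(h,l)\in N_r(i,j)}C^{hl}_{ij}f(y_{hl}(s_k))y_{ij}(s_k)+\delta_k\zeta^{ij}_k$. Solutions are left-continuous, continuous except for discontinuities of the first kind at the $s_k$. Let $u_{ij}(s,\tau)=e^{-a_{ij}(s-\tau)}\prod_{\nu=l}^{k}(1-\delta_\nu a_{ij})$ if $s_{l-1}<\tau\le s_l$, $s_k<s\le s_{k+1}$, $k\ge l$, and $u_{ij}(s,\tau)=e^{-a_{ij}(s-\tau)}$ if $s_k<\tau\le s\le s_{k+1}$. Let $\lambda_{ij}=a_{ij}-\frac1{\psi(\omega)}\sum_{\nu=0}^{p-1}\ln|1-\delta_\nu a_{ij}|$, $\lambda=\min_{(i,j)}\lambda_{ij}$. Conditions: (C1) $\delta_ka_{ij}\ne1$ for all $i,j,k$; (C2) $\lambda>0$; (C3) $\sup_{s\in\mathbb R}|f(s)|\le M_f$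 for some $M_f>0$; (C4) $|f(s_1)-f(s_2)|\le L_f|s_1-s_2|$ for all $s_1,s_2$, for some $L_f>0$. Under (C1),(C2) fix positive numbers $K_{ij}$ with $|u_{ij}(s,\tau)|\le K_{ij}e^{-\lambda_{ij}(s-\tau)}$ for $s\ge\tau$. Define $\bar c=\max_{(i,j)}\big(\frac{K_{ij}}{\lambda_{ij}}+\frac{p\delta K_{ij}}{1-e^{-\lambda_{ij}\psi(\omega)}}\big)\sum_{(h,l)\in N_r(i,j)}C^{hl}_{ij}$, $M_F=\max_{\eta\in\Lambda}\|F(\eta)\|$, $H_0=\frac{M_F}{1-M_f\bar c}\max_{(i,j)}\big(\frac{K_{ij}}{\lambda_{ij}}+\frac{p\delta K_{ij}}{1-e^{-\lambda_{ij}\psi(\omega)}}\big)$, $\bar d=(M_f+H_0L_f)\max_{(i,j)}K_{ij}\sum_{(h,l)\in N_r(i,j)}C^{hl}_{ij}$. (C5) $(M_f+H_0L_f)\bar c<1$. (C6) $-\lambda+\bar d+\frac{p}{\psi(\omega)}\ln(1+\delta\bar d)<0$. Under (C1)–(C5), for $\zeta\in\Theta$ the system $(I_\zeta)$ has a unique solution $\phi_\zeta$ on $\mathbb R$ with $\sup_s\|\phi_\zeta(s)\|\le H_0$; define $\varphi_\zeta:\mathbb T_0\to\mathbb R^{mn}$ by $\varphi_\zeta(t)=\phi_\zeta(\psi(t))$ for $t\in\mathbb T_0'$ and $\varphi_\zeta(\theta_{2k+1})=\phi_\zeta(s_k+)$. Then $\varphi_\zeta$ is the unique solution of $(N_\zeta)$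 on $\mathbb T_0$ with $\sup_{t\in\mathbb T_0}\|\varphi_\zeta(t)\|\le H_0$. *)

theory Defs
  imports "HOL-Analysis.Analysis"
begin

text \<open>Cells (i,j) with 1 <= i <= m, 1 <= j <= n; vectors of R^(mn) are functions
  nat * nat => real vanishing outside the cell set.\<close>

definition Icells :: "nat \<Rightarrow> nat \<Rightarrow> (nat \<times> nat) set" where
  "Icells m n = {1..m} \<times> {1..n}"

definition nbhd :: "nat \<Rightarrow> nat \<Rightarrow> nat \<Rightarrow> nat \<times> nat \<Rightarrow> (nat \<times> nat) set" where
  "nbhd m n r ij = {(h,l) \<in> Icells m n.
      max \<bar>int h - int (fst ij)\<bar> \<bar>int l - int (snd ij)\<bar> \<le> int r}"

definition Rmn :: "nat \<Rightarrow> nat \<Rightarrow> (nat \<times> nat \<Rightarrow> real) set" where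
  "Rmn m n = {v. \<forall>ij. ij \<notin> Icells m n \<longrightarrow> v ij = 0}"

definition vnorm :: "nat \<Rightarrow> nat \<Rightarrow> (nat \<times> nat \<Rightarrow> real) \<Rightarrow> real" where
  "vnorm m n v = Max ((\<lambda>ij. \<bar>v ij\<bar>) ` Icells m n)"

definition T0 :: "(int \<Rightarrow> real) \<Rightarrow> real set" where
  "T0 \<theta> = (\<Union>k::int. {\<theta> (2*k - 1) .. \<theta> (2*k)})"

definition dlt :: "(int \<Rightarrow> real) \<Rightarrow> int \<Rightarrow> real" where
  "dlt \<theta> k = \<theta> (2*k + 1) - \<theta> (2*k)"

definition eta :: "(int \<Rightarrow> real) \<Rightarrow> int \<Rightarrow> real" where
  "eta \<theta> k = \<theta> (2*k) - \<theta> (2*k - 1)"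

definition dmax :: "(int \<Rightarrow> real) \<Rightarrow> nat \<Rightarrow> real" where
  "dmax \<theta> p = Max (dlt \<theta> ` {1 .. int p})"

definition psi :: "(int \<Rightarrow> real) \<Rightarrow> real \<Rightarrow> real" where
  "psi \<theta> t = (if 0 \<le> t then t - sum (dlt \<theta>) {k. 0 < \<theta> (2*k) \<and> \<theta> (2*k) < t}
               else t + sum (dlt \<theta>) {k. t \<le> \<theta> (2*k) \<and> \<theta> (2*k) < 0})"

definition psi_om :: "(int \<Rightarrow> real) \<Rightarrow> nat \<Rightarrow> real" where
  "psi_om \<theta> p = sum (eta \<theta>) {1 .. int p}"

definition sk :: "(int \<Rightarrow> real) \<Rightarrow> int \<Rightarrow> real" where
  "sk \<theta> k = psi \<theta> (\<theta> (2*k))"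

definition uu :: "(int \<Rightarrow> real) \<Rightarrow> real \<Rightarrow> real \<Rightarrow> real \<Rightarrow> real" where
  "uu \<theta> a s \<tau> = exp (- a * (s - \<tau>)) *
      prod (\<lambda>\<nu>. 1 - dlt \<theta> \<nu> * a) {\<nu>. \<tau> \<le> sk \<theta> \<nu> \<and> sk \<theta> \<nu> < s}"

definition lam :: "(int \<Rightarrow> real) \<Rightarrow> nat \<Rightarrow> real \<Rightarrow> real" where
  "lam \<theta> p a = a - (1 / psi_om \<theta> p) * (\<Sum>\<nu>\<in>{0 .. int p - 1}. ln \<bar>1 - dlt \<theta> \<nu> * a\<bar>)"

definition lam_min :: "nat \<Rightarrow> nat \<Rightarrow> (int \<Rightarrow> real) \<Rightarrow> nat \<Rightarrow> (nat \<times> nat \<Rightarrow> real) \<Rightarrow> real" where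
  "lam_min m n \<theta> p a = Min ((\<lambda>ij. lam \<theta> p (a ij)) ` Icells m n)"

definition Theta :: "(nat \<times> nat \<Rightarrow> real) set \<Rightarrow> ((nat \<times> nat \<Rightarrow> real) \<Rightarrow> (nat \<times> nat \<Rightarrow> real))
    \<Rightarrow> (int \<Rightarrow> nat \<times> nat \<Rightarrow> real) set" where
  "Theta \<Lambda> F = {\<zeta>. \<forall>k. \<zeta> k \<in> \<Lambda> \<and> \<zeta> (k + 1) = F (\<zeta> k)}"

definition Gfac :: "(int \<Rightarrow> real) \<Rightarrow> nat \<Rightarrow> (nat \<times> nat \<Rightarrow> real) \<Rightarrow> (nat \<times> nat \<Rightarrow> real)
    \<Rightarrow> nat \<times> nat \<Rightarrow> real" where
  "Gfac \<theta> p K a ij = K ij / lam \<theta> p (a ij)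
      + real p * dmax \<theta> p * K ij / (1 - exp (- lam \<theta> p (a ij) * psi_om \<theta> p))"

definition Csum :: "nat \<Rightarrow> nat \<Rightarrow> nat \<Rightarrow> (nat \<times> nat \<Rightarrow> nat \<times> nat \<Rightarrow> real) \<Rightarrow> nat \<times> nat \<Rightarrow> real" where
  "Csum m n r C ij = (\<Sum>hl\<in>nbhd m n r ij. C ij hl)"

definition cbar where
  "cbar m n r \<theta> p K a C = Max ((\<lambda>ij. Gfac \<theta> p K a ij * Csum m n r C ij) ` Icells m n)"

definition MF where
  "MF m n \<Lambda> F = Sup ((\<lambda>\<eta>. vnorm m n (F \<eta>)) ` \<Lambda>)"

definition H0 where
  "H0 m n r \<theta> p K a C \<Lambda> F Mf =
     MF m n \<Lambda> F / (1 - Mf * cbar m n r \<theta> p K a C) * Max (Gfac \<theta> p K a ` Icells m n)"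

definition dbar where
  "dbar m n r \<theta> p K a C \<Lambda> F Mf Lf =
     (Mf + H0 m n r \<theta> p K a C \<Lambda> F Mf * Lf) * Max ((\<lambda>ij. K ij * Csum m n r C ij) ` Icells m n)"

text \<open>Solutions of the network (N_zeta) on T0 \<inter> D (D = UNIV or D = {t0..}):
  on every interval [theta(2k-1), theta(2k)] \<inter> D the function is (one-sidedly)
  differentiable and satisfies the ODE, and the jump relation holds from
  theta(2k) to theta(2k+1) whenever theta(2k) lies in D.\<close>

definition network_sol where
  "network_sol m n r a C f \<theta> \<zeta> D x \<longleftrightarrow>
     (\<forall>k::int. \<forall>ij\<in>Icells m n.
        (let S = {\<theta> (2*k - 1) .. \<theta> (2*k)} \<inter> D in
          \<forall>t\<in>S. ((\<lambda>s. x s ij) has_real_derivative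
             (- a ij * x t ij - (\<Sum>hl\<in>nbhd m n r ij. C ij hl * f (x t hl) * x t ij) + \<zeta> k ij))
             (at t within S))
      \<and> (\<theta> (2*k) \<in> D \<longrightarrow>
          x (\<theta> (2*k + 1)) ij = (1 - dlt \<theta> k * a ij) * x (\<theta> (2*k)) ij
             - dlt \<theta> k * (\<Sum>hl\<in>nbhd m n r ij. C ij hl * f (x (\<theta> (2*k)) hl) * x (\<theta> (2*k)) ij)
             + dlt \<theta> k * \<zeta> k ij))"

end

theory Submission
  imports Defs
begin

text \<open>Componentwise, the difference \<open>z = x - \<phi>\<close> of two solutions solves the linear impulsive problem
  \<open>z' = - a z - G\<close>, \<open>z(\<theta>(2k+1)) = (1 - \<delta>\<^sub>k a) z(\<theta>(2k)) - \<delta>\<^sub>k G\<close>, where the coupling difference \<open>G\<close>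
  is bounded by \<open>(M\<^sub>f + H\<^sub>0 L\<^sub>f) \<Sigma>C \<parallel>x - \<phi>\<parallel>\<close> because \<open>\<phi>\<close> is bounded by \<open>H\<^sub>0\<close>. Transporting \<open>z\<close> with the
  Cauchy function along the clock \<open>\<psi>\<close>, which collapses every gap \<open>[\<theta>(2k), \<theta>(2k+1)]\<close> into an impulse,
  yields a variation-of-constants inequality for \<open>\<parallel>x - \<phi>\<parallel>\<close>. A Gronwall argument over \<open>T\<^sub>0\<close>, in which
  each gap costs a factor \<open>1 + \<delta>\<^sub>k d\<close>, bounds \<open>e\<^bsup>\<lambda>\<psi>(t)\<^esup> \<parallel>x - \<phi>\<parallel>\<close> by a constant times
  \<open>e\<^bsup>d\<psi>(t)\<^esup> \<Prod>(1 + \<delta>\<^sub>k d)\<close>. By periodicity at most \<open>p\<close> gaps fall into each period \<open>\<psi>(\<omega>)\<close> of the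
  clock, so the product grows at most like \<open>exp (p/\<psi>(\<omega>) ln (1 + \<delta> d) \<psi>(t))\<close>, and (C6) makes the
  total exponent negative.\<close>

section \<open>The time scale and its clock\<close>

definition piece :: "(int \<Rightarrow> real) \<Rightarrow> int \<Rightarrow> real set" where
  "piece \<theta> k = {\<theta> (2*k - 1) .. \<theta> (2*k)}"

text \<open>\<open>psi_on \<theta> k\<close> is the clock \<open>\<psi>\<close> of the paper restricted to the \<open>k\<close>-th piece of \<open>T\<^sub>0\<close>.\<close>

definition psi_on :: "(int \<Rightarrow> real) \<Rightarrow> int \<Rightarrow> real \<Rightarrow> real" where
  "psi_on \<theta> k t = t - \<theta> (2*k) + sk \<theta> k"

lemma T0_eq_Union_piece: "T0 \<theta> = (\<Union>k. piece \<theta> k)"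
  unfolding T0_def piece_def ..

lemma piece_subset_T0: "piece \<theta> j \<subseteq> T0 \<theta>"
  unfolding T0_eq_Union_piece by blast

locale time_scale =
  fixes \<theta> :: "int \<Rightarrow> real"
  assumes strict_mono_\<theta>: "strict_mono \<theta>" and \<theta>_neg: "\<theta> (-1) < 0" and \<theta>_pos: "0 < \<theta> 0"
begin

lemma \<theta>_less_iff [simp]: "\<theta> i < \<theta> j \<longleftrightarrow> i < j"
  using strict_mono_less[OF strict_mono_\<theta>] .

lemma \<theta>_le_iff [simp]: "\<theta> i \<le> \<theta> j \<longleftrightarrow> i \<le> j"
  using strict_mono_less_eq[OF strict_mono_\<theta>] .

lemma \<theta>_even_pos_iff: "0 < \<theta> (2*j) \<longleftrightarrow> 0 \<le> j"
  using \<theta>_less_iff[of "-1" "2*j"] \<theta>_le_iff[of 0 "2*j"] \<theta>_neg \<theta>_pos by linarith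

lemma \<theta>_even_neg_iff: "\<theta> (2*j) < 0 \<longleftrightarrow> j < 0"
  using \<theta>_less_iff[of "2*j" "-1"] \<theta>_le_iff[of 0 "2*j"] \<theta>_neg \<theta>_pos by linarith

lemma dlt_pos: "0 < dlt \<theta> k"
  unfolding dlt_def by simp

lemma eta_pos: "0 < eta \<theta> k"
  unfolding eta_def by simp

lemma sk_nonneg_index: "0 \<le> k \<Longrightarrow> sk \<theta> k = \<theta> (2*k) - sum (dlt \<theta>) {0..<k}"
proof -
  assume k: "0 \<le> k"
  have "{j. 0 < \<theta> (2*j) \<and> \<theta> (2*j) < \<theta> (2*k)} = {0..<k}"
    by (auto simp: \<theta>_even_pos_iff)
  then show ?thesis
    unfolding sk_def psi_def using k \<theta>_even_pos_iff[of k] by simp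
qed

lemma sk_neg_index: "k < 0 \<Longrightarrow> sk \<theta> k = \<theta> (2*k) + sum (dlt \<theta>) {k..<0}"
proof -
  assume k: "k < 0"
  have "{j. \<theta> (2*k) \<le> \<theta> (2*j) \<and> \<theta> (2*j) < 0} = {k..<0}"
    by (auto simp: \<theta>_even_neg_iff)
  then show ?thesis
    unfolding sk_def psi_def using k \<theta>_even_neg_iff[of k] by simp
qed

lemma sk_eq_pred_add_eta: "sk \<theta> k = sk \<theta> (k-1) + eta \<theta> k"
proof (cases "0 \<le> k - 1")
  case True
  then have "{0..<k} = insert (k-1) {0..<k-1}" by auto
  with True show ?thesis
    by (simp add: sk_nonneg_index eta_def dlt_def)
next
  case False
  consider "k = 0" | "k < 0" using False by linarith
  then show ?thesis
  proof cases
    case 1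
    have "{-1..<0::int} = {-1}" by auto
    then show ?thesis
      using 1 by (simp add: sk_nonneg_index sk_neg_index eta_def dlt_def)
  next
    case 2
    then have "{k-1..<0} = insert (k-1) {k..<0}" by auto
    with 2 show ?thesis
      by (simp add: sk_neg_index eta_def dlt_def algebra_simps)
  qed
qed

lemma sk_succ: "sk \<theta> (k+1) = sk \<theta> k + eta \<theta> (k+1)"
  using sk_eq_pred_add_eta[of "k+1"] by (metis add_diff_cancel_right')

lemma sk_less_succ: "sk \<theta> k < sk \<theta> (k+1)"
  using sk_succ[of k] eta_pos[of "k+1"] by linarith

lemma sk_strict_mono: "strict_mono (sk \<theta>)"
proof (rule strict_monoI)
  fix i j :: int assume "i < j"
  then show "sk \<theta> i < sk \<theta> j"
  proof (induction j rule: int_gr_induct)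
    case (step j)
    then show ?case using sk_less_succ[of j] by linarith
  qed (rule sk_less_succ)
qed

lemma sk_less_iff [simp]: "sk \<theta> i < sk \<theta> j \<longleftrightarrow> i < j"
  using strict_mono_less[OF sk_strict_mono] .

lemma sk_le_iff [simp]: "sk \<theta> i \<le> sk \<theta> j \<longleftrightarrow> i \<le> j"
  using strict_mono_less_eq[OF sk_strict_mono] .

lemma piece_subset_atLeast: "t0 \<in> piece \<theta> k0 \<Longrightarrow> k0 < j \<Longrightarrow> piece \<theta> j \<subseteq> {t0..}"
proof -
  assume "t0 \<in> piece \<theta> k0" "k0 < j"
  then have "t0 \<le> \<theta> (2*k0)" and "\<theta> (2*k0) \<le> \<theta> (2*j - 1)" unfolding piece_def by simp_all
  then have "t0 \<le> \<theta> (2*j - 1)" by (rule order_trans)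
  then show ?thesis unfolding piece_def by auto
qed

lemma psi_on_left [simp]: "psi_on \<theta> k (\<theta> (2*k - 1)) = sk \<theta> (k-1)"
  using sk_eq_pred_add_eta[of k] unfolding psi_on_def eta_def by linarith

lemma psi_on_right [simp]: "psi_on \<theta> k (\<theta> (2*k)) = sk \<theta> k"
  unfolding psi_on_def by simp

lemma psi_on_piece:
  assumes "t \<in> piece \<theta> k"
  shows "sk \<theta> (k-1) \<le> psi_on \<theta> k t" and "psi_on \<theta> k t \<le> sk \<theta> k"
  using assms sk_eq_pred_add_eta[of k] unfolding piece_def psi_on_def eta_def by auto

end

section \<open>The Cauchy function\<close>

text \<open>The Cauchy function \<open>u(s, \<sigma>)\<close> of the paper with the blocks \<open>j\<close> of \<open>\<sigma>\<close> and \<open>k\<close> of \<open>s\<close> fixed, so that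
  it is continuous up to the left block ends, where \<open>uu\<close> jumps.\<close>

definition cauchy_fun :: "(int \<Rightarrow> real) \<Rightarrow> real \<Rightarrow> int \<Rightarrow> int \<Rightarrow> real \<Rightarrow> real \<Rightarrow> real" where
  "cauchy_fun \<theta> a j k s \<sigma> = exp (- a * (s - \<sigma>)) * (\<Prod>\<nu>\<in>{j..<k}. 1 - dlt \<theta> \<nu> * a)"

context time_scale
begin

lemma uu_eq_cauchy_fun:
  assumes "sk \<theta> (k-1) < s" "s \<le> sk \<theta> k" "sk \<theta> (j-1) < \<sigma>" "\<sigma> \<le> sk \<theta> j"
  shows "uu \<theta> a s \<sigma> = cauchy_fun \<theta> a j k s \<sigma>"
proof -
  have "\<sigma> \<le> sk \<theta> \<nu> \<and> sk \<theta> \<nu> < s \<longleftrightarrow> \<nu> \<in> {j..<k}" for \<nu>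
  proof
    assume "\<sigma> \<le> sk \<theta> \<nu> \<and> sk \<theta> \<nu> < s"
    then have "sk \<theta> (j-1) < sk \<theta> \<nu>" "sk \<theta> \<nu> < sk \<theta> k" using assms by linarith+
    then show "\<nu> \<in> {j..<k}" by simp
  next
    assume "\<nu> \<in> {j..<k}"
    then have "sk \<theta> j \<le> sk \<theta> \<nu>" "sk \<theta> \<nu> \<le> sk \<theta> (k-1)" by simp_all
    then show "\<sigma> \<le> sk \<theta> \<nu> \<and> sk \<theta> \<nu> < s" using assms by linarith
  qed
  then have "{\<nu>. \<sigma> \<le> sk \<theta> \<nu> \<and> sk \<theta> \<nu> < s} = {j..<k}" by blast
  then show ?thesis unfolding uu_def cauchy_fun_def by (rule arg_cong)
qed

text \<open>Proved by continuity from the half-open blocks, where \<open>uu\<close> and \<open>cauchy_fun\<close> agree.\<close>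

lemma cauchy_fun_bound:
  assumes uu_bound: "\<forall>s \<sigma>. \<sigma> \<le> s \<longrightarrow> \<bar>uu \<theta> a s \<sigma>\<bar> \<le> K * exp (- l * (s - \<sigma>))"
    and "j \<le> k" and s: "sk \<theta> (k-1) \<le> s" "s \<le> sk \<theta> k"
    and \<sigma>: "sk \<theta> (j-1) \<le> \<sigma>" "\<sigma> \<le> sk \<theta> j" and "\<sigma> \<le> s"
  shows "\<bar>cauchy_fun \<theta> a j k s \<sigma>\<bar> \<le> K * exp (- l * (s - \<sigma>))"
proof -
  define S where "S = (\<lambda>e::real. s + e * (sk \<theta> k - s))"
  define \<Sigma> where "\<Sigma> = (\<lambda>e::real. \<sigma> + e * (sk \<theta> j - \<sigma>))"
  define g where "g = (\<lambda>e. \<bar>cauchy_fun \<theta> a j k (S e) (\<Sigma> e)\<bar> - K * exp (- l * (S e - \<Sigma> e)))"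
  have inside: "lo < x + e * (hi - x) \<and> x + e * (hi - x) \<le> hi"
    if "lo \<le> x" "x \<le> hi" "lo < hi" "0 < e" "e < 1" for lo x hi e :: real
  proof -
    have "(1 - e) * lo \<le> (1 - e) * x" using that by (intro mult_left_mono) auto
    moreover have "e * lo < e * hi" using that by simp
    moreover have "e * (hi - x) \<le> hi - x" using that by (intro mult_left_le_one_le) auto
    ultimately show ?thesis by (simp add: algebra_simps)
  qed
  have "g e \<le> 0" if e: "0 < e" "e < 1" for e
  proof -
    have S_e: "sk \<theta> (k-1) < S e" "S e \<le> sk \<theta> k"
      using inside[OF s _ e] unfolding S_def by simp_all
    have \<Sigma>_e: "sk \<theta> (j-1) < \<Sigma> e" "\<Sigma> e \<le> sk \<theta> j"
      using inside[OF \<sigma> _ e] unfolding \<Sigma>_def by simp_all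
    have "\<Sigma> e \<le> S e"
    proof (cases "j = k")
      case True
      then have "S e - \<Sigma> e = (1 - e) * (s - \<sigma>)" unfolding S_def \<Sigma>_def by (simp add: algebra_simps)
      moreover have "0 \<le> (1 - e) * (s - \<sigma>)" using e \<open>\<sigma> \<le> s\<close> by simp
      ultimately show ?thesis by linarith
    next
      case False
      then have "sk \<theta> j \<le> sk \<theta> (k-1)" using \<open>j \<le> k\<close> by simp
      then show ?thesis using S_e \<Sigma>_e by linarith
    qed
    then have "\<bar>uu \<theta> a (S e) (\<Sigma> e)\<bar> \<le> K * exp (- l * (S e - \<Sigma> e))"
      using uu_bound by blast
    then show ?thesis
      unfolding g_def uu_eq_cauchy_fun[OF S_e \<Sigma>_e] by simp
  qed
  then have "eventually (\<lambda>e. g e \<le> 0) (at_right 0)"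
    using eventually_at_right_real[of 0 1] by (auto elim: eventually_mono)
  moreover have "continuous_on UNIV g"
    unfolding g_def S_def \<Sigma>_def cauchy_fun_def by (intro continuous_intros)
  then have "(g \<longlongrightarrow> g 0) (at_right 0)"
    by (simp add: continuous_on_def filterlim_at_split)
  ultimately have "g 0 \<le> 0" by (intro tendsto_upperbound) auto
  then show ?thesis unfolding g_def S_def \<Sigma>_def by simp
qed

end

section \<open>Variation of constants\<close>

lemma has_real_derivative_nonneg_imp_le:
  fixes F F' :: "real \<Rightarrow> real"
  assumes "a \<le> b"
    and "\<And>x. x \<in> {a..b} \<Longrightarrow> (F has_real_derivative F' x) (at x within {a..b})"
    and "\<And>x. x \<in> {a..b} \<Longrightarrow> 0 \<le> F' x"
  shows "F a \<le> F b"
proof (rule DERIV_nonneg_imp_increasing_open[OF assms(1)])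
  show "\<exists>y. (F has_real_derivative y) (at x) \<and> 0 \<le> y" if "a < x" "x < b" for x
    using assms(2,3)[of x] that by (auto simp: at_within_Icc_at)
  show "continuous_on {a..b} F"
    unfolding continuous_on_eq_continuous_within using assms(2) DERIV_continuous by blast
qed

lemma abs_diff_le_integral_of_deriv_bound:
  fixes h h' g :: "real \<Rightarrow> real"
  assumes "a \<le> b" and "continuous_on {a..b} g"
    and h': "\<And>x. x \<in> {a..b} \<Longrightarrow> (h has_real_derivative h' x) (at x within {a..b})"
    and "\<And>x. x \<in> {a..b} \<Longrightarrow> \<bar>h' x\<bar> \<le> g x"
  shows "\<bar>h b - h a\<bar> \<le> integral {a..b} g"
proof -
  have G: "((\<lambda>x. integral {a..x} g) has_real_derivative g x) (at x within {a..b})"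
    if "x \<in> {a..b}" for x
    using integral_has_real_derivative[OF assms(2) that] .
  have "integral {a..a} g - h a \<le> integral {a..b} g - h b"
  proof (rule has_real_derivative_nonneg_imp_le[OF assms(1)])
    fix x assume x: "x \<in> {a..b}"
    show "((\<lambda>x. integral {a..x} g - h x) has_real_derivative g x - h' x) (at x within {a..b})"
      using G[OF x] h'[OF x] by (rule DERIV_diff)
    show "0 \<le> g x - h' x" using assms(4)[OF x] by (simp add: abs_le_iff)
  qed
  moreover have "integral {a..a} g + h a \<le> integral {a..b} g + h b"
  proof (rule has_real_derivative_nonneg_imp_le[OF assms(1)])
    fix x assume x: "x \<in> {a..b}"
    show "((\<lambda>x. integral {a..x} g + h x) has_real_derivative g x + h' x) (at x within {a..b})"
      using G[OF x] h'[OF x] by (rule DERIV_add)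
    show "0 \<le> g x + h' x" using assms(4)[OF x] by (simp add: abs_le_iff)
  qed
  ultimately show ?thesis by simp
qed

text \<open>The \<open>\<Delta>\<close>-integral over \<open>T\<^sub>0\<close> from \<open>\<theta>(2k\<^sub>1-1)\<close> to a point \<open>t\<close> of the \<open>k\<close>-th piece: the gap after piece
  \<open>i\<close> contributes \<open>\<delta>\<^sub>i w(\<theta>(2i))\<close>. The integrand is indexed by the piece because integrands built from
  \<open>psi_on\<close> depend on it.\<close>

definition ts_integral :: "(int \<Rightarrow> real) \<Rightarrow> int \<Rightarrow> (int \<Rightarrow> real \<Rightarrow> real) \<Rightarrow> int \<Rightarrow> real \<Rightarrow> real" where
  "ts_integral \<theta> k1 w k t =
     (\<Sum>i\<in>{k1..<k}. integral (piece \<theta> i) (w i) + dlt \<theta> i * w i (\<theta> (2*i))) + integral {\<theta> (2*k - 1)..t} (w k)"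

lemma exp_shift: "exp (- l * (S - \<sigma>)) = exp (- l * (S - s0)) * exp (l * (\<sigma> - s0 :: real))"
proof -
  have "- l * (S - \<sigma>) = - l * (S - s0) + l * (\<sigma> - s0)" by (simp add: algebra_simps)
  then show ?thesis by (simp only: exp_add)
qed

context time_scale
begin

lemma cauchy_fun_same_block [simp]: "cauchy_fun \<theta> a k k s s = 1"
  unfolding cauchy_fun_def by simp

lemma cauchy_fun_split_first:
  "j < k \<Longrightarrow> cauchy_fun \<theta> a j k s \<sigma> = (1 - dlt \<theta> j * a) * cauchy_fun \<theta> a (j+1) k s \<sigma>"
proof -
  assume "j < k"
  then have "{j..<k} = insert j {j+1..<k}" by auto
  then show ?thesis unfolding cauchy_fun_def by simp
qed

lemma cauchy_fun_psi_on_deriv: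
  "((\<lambda>x. cauchy_fun \<theta> a j k S (psi_on \<theta> j x)) has_real_derivative
     a * cauchy_fun \<theta> a j k S (psi_on \<theta> j x)) (at x within A)"
  unfolding cauchy_fun_def psi_on_def
  by (auto intro!: derivative_eq_intros simp: algebra_simps)

lemma ts_integral_start [simp]: "ts_integral \<theta> k1 w k1 (\<theta> (2*k1 - 1)) = 0"
  unfolding ts_integral_def by simp

lemma ts_integral_split:
  "ts_integral \<theta> k1 w k t = ts_integral \<theta> k1 w k (\<theta> (2*k - 1)) + integral {\<theta> (2*k - 1)..t} (w k)"
  unfolding ts_integral_def by simp

lemma ts_integral_next_piece:
  "k1 \<le> k \<Longrightarrow> ts_integral \<theta> k1 w (k+1) (\<theta> (2*k + 1)) = ts_integral \<theta> k1 w k (\<theta> (2*k)) + dlt \<theta> k * w k (\<theta> (2*k))"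
proof -
  assume "k1 \<le> k"
  then have "{k1..<k+1} = insert k {k1..<k}" by auto
  moreover have "\<theta> (2*(k+1) - 1) = \<theta> (2*k + 1)" by (simp add: algebra_simps)
  ultimately show ?thesis unfolding ts_integral_def piece_def by simp
qed

text \<open>The transported value \<open>cauchy_fun \<theta> a j k S (psi_on \<theta> j \<tau>) * z \<tau>\<close> changes only through \<open>G\<close>:
  inside a piece the terms with \<open>a\<close> cancel in its derivative, and across a gap the factor
  \<open>1 - \<delta>\<^sub>j a\<close> of the Cauchy function absorbs the linear part of the jump.\<close>

context
  fixes a K l c :: real and z G N :: "real \<Rightarrow> real" and k1 :: int
  assumes uu_bound: "\<forall>s \<sigma>. \<sigma> \<le> s \<longrightarrow> \<bar>uu \<theta> a s \<sigma>\<bar> \<le> K * exp (- l * (s - \<sigma>))"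
    and K_nonneg: "0 \<le> K" and c_nonneg: "0 \<le> c"
    and z_deriv: "\<And>j \<tau>. k1 \<le> j \<Longrightarrow> \<tau> \<in> piece \<theta> j \<Longrightarrow>
        (z has_real_derivative - a * z \<tau> - G \<tau>) (at \<tau> within piece \<theta> j)"
    and z_jump: "\<And>j. k1 \<le> j \<Longrightarrow>
        z (\<theta> (2*j + 1)) = (1 - dlt \<theta> j * a) * z (\<theta> (2*j)) - dlt \<theta> j * G (\<theta> (2*j))"
    and G_bound: "\<And>j \<tau>. k1 \<le> j \<Longrightarrow> \<tau> \<in> piece \<theta> j \<Longrightarrow> \<bar>G \<tau>\<bar> \<le> c * N \<tau>"
    and N_cont: "\<And>j. k1 \<le> j \<Longrightarrow> continuous_on (piece \<theta> j) N"
begin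

lemma transported_piece_bound:
  assumes j: "k1 \<le> j" "j \<le> k" and S: "sk \<theta> (k-1) \<le> S" "S \<le> sk \<theta> k"
    and b: "b \<in> piece \<theta> j" and bS: "psi_on \<theta> j b \<le> S"
  shows "\<bar>cauchy_fun \<theta> a j k S (psi_on \<theta> j b) * z b - cauchy_fun \<theta> a j k S (sk \<theta> (j-1)) * z (\<theta> (2*j - 1))\<bar>
    \<le> K * c * exp (- l * (S - s0)) * integral {\<theta> (2*j - 1)..b} (\<lambda>\<tau>. exp (l * (psi_on \<theta> j \<tau> - s0)) * N \<tau>)"
proof -
  define \<Phi> where "\<Phi> = (\<lambda>\<tau>. cauchy_fun \<theta> a j k S (psi_on \<theta> j \<tau>) * z \<tau>)"
  define E where "E = K * c * exp (- l * (S - s0))"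
  have sub: "{\<theta> (2*j - 1)..b} \<subseteq> piece \<theta> j" using b unfolding piece_def by auto
  have "\<bar>\<Phi> b - \<Phi> (\<theta> (2*j - 1))\<bar> \<le> integral {\<theta> (2*j - 1)..b} (\<lambda>\<tau>. E * (exp (l * (psi_on \<theta> j \<tau> - s0)) * N \<tau>))"
  proof (rule abs_diff_le_integral_of_deriv_bound
      [where h'="\<lambda>x. - cauchy_fun \<theta> a j k S (psi_on \<theta> j x) * G x"])
    show "\<theta> (2*j - 1) \<le> b" using b unfolding piece_def by simp
    show "continuous_on {\<theta> (2*j - 1)..b} (\<lambda>\<tau>. E * (exp (l * (psi_on \<theta> j \<tau> - s0)) * N \<tau>))"
      unfolding psi_on_def
      by (intro continuous_intros continuous_on_subset[OF N_cont[OF j(1)] sub])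
  next
    fix x assume x: "x \<in> {\<theta> (2*j - 1)..b}"
    then have xj: "x \<in> piece \<theta> j" using sub by auto
    have "(\<Phi> has_real_derivative
        a * cauchy_fun \<theta> a j k S (psi_on \<theta> j x) * z x + (- a * z x - G x) * cauchy_fun \<theta> a j k S (psi_on \<theta> j x))
        (at x within {\<theta> (2*j - 1)..b})"
      unfolding \<Phi>_def
      by (rule DERIV_mult[OF cauchy_fun_psi_on_deriv DERIV_subset[OF z_deriv[OF j(1) xj] sub]])
    then show "(\<Phi> has_real_derivative - cauchy_fun \<theta> a j k S (psi_on \<theta> j x) * G x) (at x within {\<theta> (2*j - 1)..b})"
      by (rule DERIV_cong) (simp add: algebra_simps)
    have "psi_on \<theta> j x \<le> psi_on \<theta> j b" using x unfolding psi_on_def by simp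
    then have "\<bar>cauchy_fun \<theta> a j k S (psi_on \<theta> j x)\<bar> \<le> K * exp (- l * (S - psi_on \<theta> j x))"
      using cauchy_fun_bound[OF uu_bound j(2) S psi_on_piece[OF xj]] bS by simp
    moreover have "\<bar>G x\<bar> \<le> c * N x" by (rule G_bound[OF j(1) xj])
    ultimately have "\<bar>cauchy_fun \<theta> a j k S (psi_on \<theta> j x)\<bar> * \<bar>G x\<bar> \<le> K * exp (- l * (S - psi_on \<theta> j x)) * (c * N x)"
      by (rule mult_mono) (simp_all add: K_nonneg)
    then show "\<bar>- cauchy_fun \<theta> a j k S (psi_on \<theta> j x) * G x\<bar> \<le> E * (exp (l * (psi_on \<theta> j x - s0)) * N x)"
      unfolding E_def exp_shift[of l S "psi_on \<theta> j x" s0] by (simp add: abs_mult algebra_simps)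
  qed
  then show ?thesis unfolding \<Phi>_def E_def by simp
qed

lemma transported_jump_bound:
  assumes j: "k1 \<le> j" "j < k" and S: "sk \<theta> (k-1) \<le> S" "S \<le> sk \<theta> k"
  shows "\<bar>cauchy_fun \<theta> a (j+1) k S (sk \<theta> j) * z (\<theta> (2*j + 1)) - cauchy_fun \<theta> a j k S (sk \<theta> j) * z (\<theta> (2*j))\<bar>
    \<le> K * c * exp (- l * (S - s0)) * (dlt \<theta> j * (exp (l * (sk \<theta> j - s0)) * N (\<theta> (2*j))))"
proof -
  define Q where "Q = cauchy_fun \<theta> a (j+1) k S (sk \<theta> j)"
  have "cauchy_fun \<theta> a (j+1) k S (sk \<theta> j) * z (\<theta> (2*j + 1)) - cauchy_fun \<theta> a j k S (sk \<theta> j) * z (\<theta> (2*j))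
      = - (Q * (dlt \<theta> j * G (\<theta> (2*j))))"
    unfolding Q_def z_jump[OF j(1)] cauchy_fun_split_first[OF j(2)] by (simp add: algebra_simps)
  then have "\<bar>cauchy_fun \<theta> a (j+1) k S (sk \<theta> j) * z (\<theta> (2*j + 1)) - cauchy_fun \<theta> a j k S (sk \<theta> j) * z (\<theta> (2*j))\<bar>
      = \<bar>Q\<bar> * (dlt \<theta> j * \<bar>G (\<theta> (2*j))\<bar>)"
    using dlt_pos[of j] by (simp add: abs_mult)
  also have "\<dots> \<le> K * exp (- l * (S - sk \<theta> j)) * (dlt \<theta> j * (c * N (\<theta> (2*j))))"
  proof (rule mult_mono)
    have "sk \<theta> j \<le> sk \<theta> (k-1)" using j by simp
    then have "sk \<theta> j \<le> S" using S by linarith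
    then show "\<bar>Q\<bar> \<le> K * exp (- l * (S - sk \<theta> j))"
      unfolding Q_def using S j by (intro cauchy_fun_bound[OF uu_bound]) simp_all
    have "\<theta> (2*j) \<in> piece \<theta> j" unfolding piece_def by simp
    then show "dlt \<theta> j * \<bar>G (\<theta> (2*j))\<bar> \<le> dlt \<theta> j * (c * N (\<theta> (2*j)))"
      using G_bound[OF j(1)] dlt_pos[of j] by (intro mult_left_mono) simp_all
  qed (simp_all add: K_nonneg dlt_pos less_imp_le)
  also have "\<dots> = K * c * exp (- l * (S - s0)) * (dlt \<theta> j * (exp (l * (sk \<theta> j - s0)) * N (\<theta> (2*j))))"
    unfolding exp_shift[of l S "sk \<theta> j" s0] by (simp add: algebra_simps)
  finally show ?thesis .
qed

lemma transported_chain_bound: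
  assumes j: "k1 \<le> j" "j \<le> k" and S: "sk \<theta> (k-1) \<le> S" "S \<le> sk \<theta> k"
  defines "s0 \<equiv> sk \<theta> (k1-1)"
  shows "\<bar>cauchy_fun \<theta> a j k S (sk \<theta> (j-1)) * z (\<theta> (2*j - 1))\<bar> \<le> exp (- l * (S - s0)) *
     (K * \<bar>z (\<theta> (2*k1 - 1))\<bar> + K * c * ts_integral \<theta> k1 (\<lambda>j \<tau>. exp (l * (psi_on \<theta> j \<tau> - s0)) * N \<tau>) j (\<theta> (2*j - 1)))"
  using j
proof (induction j rule: int_ge_induct)
  case base
  have "s0 \<le> sk \<theta> (k-1)" unfolding s0_def using base by simp
  then have "s0 \<le> S" using S by linarith
  then have "\<bar>cauchy_fun \<theta> a k1 k S s0\<bar> \<le> K * exp (- l * (S - s0))"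
    unfolding s0_def using base S by (intro cauchy_fun_bound[OF uu_bound]) simp_all
  then have "\<bar>cauchy_fun \<theta> a k1 k S s0\<bar> * \<bar>z (\<theta> (2*k1 - 1))\<bar> \<le> K * exp (- l * (S - s0)) * \<bar>z (\<theta> (2*k1 - 1))\<bar>"
    by (rule mult_right_mono) simp
  then show ?case unfolding s0_def[symmetric] abs_mult ts_integral_start by (simp add: mult_ac)
next
  case (step j)
  define E where "E = exp (- l * (S - s0))"
  define W where "W = (\<lambda>j \<tau>. exp (l * (psi_on \<theta> j \<tau> - s0)) * N \<tau>)"
  define \<Phi> where "\<Phi> = (\<lambda>j. cauchy_fun \<theta> a j k S (sk \<theta> (j-1)) * z (\<theta> (2*j - 1)))"
  define \<Psi> where "\<Psi> = cauchy_fun \<theta> a j k S (sk \<theta> j) * z (\<theta> (2*j))"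
  define I where "I = integral {\<theta> (2*j - 1)..\<theta> (2*j)} (W j)"
  have j: "k1 \<le> j" "j < k" using step by simp_all
  have "sk \<theta> j \<le> sk \<theta> (k-1)" using j by simp
  then have "sk \<theta> j \<le> S" using S by linarith
  then have "\<bar>\<Psi> - \<Phi> j\<bar> \<le> K * c * E * I"
    using transported_piece_bound[OF j(1) less_imp_le[OF j(2)] S, of "\<theta> (2*j)" s0]
    unfolding \<Psi>_def \<Phi>_def E_def W_def I_def piece_def by simp
  moreover have "\<bar>\<Phi> (j+1) - \<Psi>\<bar> \<le> K * c * E * (dlt \<theta> j * W j (\<theta> (2*j)))"
  proof -
    have "sk \<theta> (j+1-1) = sk \<theta> j" "\<theta> (2*(j+1) - 1) = \<theta> (2*j + 1)" by (simp_all add: algebra_simps)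
    then show ?thesis
      using transported_jump_bound[OF j S, of s0] unfolding \<Psi>_def \<Phi>_def E_def W_def psi_on_right by simp
  qed
  moreover have "\<bar>\<Phi> j\<bar> \<le> E * (K * \<bar>z (\<theta> (2*k1 - 1))\<bar> + K * c * ts_integral \<theta> k1 W j (\<theta> (2*j - 1)))"
    using step.IH j unfolding \<Phi>_def E_def W_def by simp
  moreover have "\<bar>\<Phi> (j+1)\<bar> \<le> \<bar>\<Phi> j\<bar> + \<bar>\<Psi> - \<Phi> j\<bar> + \<bar>\<Phi> (j+1) - \<Psi>\<bar>"
    using abs_triangle_ineq[of "\<Phi> j" "\<Psi> - \<Phi> j"] abs_triangle_ineq[of \<Psi> "\<Phi> (j+1) - \<Psi>"] by simp
  moreover have "ts_integral \<theta> k1 W (j+1) (\<theta> (2*(j+1) - 1))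
      = ts_integral \<theta> k1 W j (\<theta> (2*j - 1)) + I + dlt \<theta> j * W j (\<theta> (2*j))"
    using ts_integral_next_piece[OF j(1), of W] ts_integral_split[of k1 W j "\<theta> (2*j)"]
    unfolding I_def by (simp add: algebra_simps)
  ultimately have "\<bar>\<Phi> (j+1)\<bar> \<le> E * (K * \<bar>z (\<theta> (2*k1 - 1))\<bar> + K * c * ts_integral \<theta> k1 W (j+1) (\<theta> (2*(j+1) - 1)))"
    by (simp add: algebra_simps)
  then show ?case unfolding \<Phi>_def E_def W_def .
qed

lemma variation_of_constants_bound:
  assumes k: "k1 \<le> k" and t: "t \<in> piece \<theta> k"
  defines "s0 \<equiv> sk \<theta> (k1-1)"
  shows "\<bar>z t\<bar> \<le> exp (- l * (psi_on \<theta> k t - s0)) *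
     (K * \<bar>z (\<theta> (2*k1 - 1))\<bar> + K * c * ts_integral \<theta> k1 (\<lambda>j \<tau>. exp (l * (psi_on \<theta> j \<tau> - s0)) * N \<tau>) k t)"
proof -
  define S where "S = psi_on \<theta> k t"
  define W where "W = (\<lambda>j \<tau>. exp (l * (psi_on \<theta> j \<tau> - s0)) * N \<tau>)"
  define \<Phi> where "\<Phi> = cauchy_fun \<theta> a k k S (sk \<theta> (k-1)) * z (\<theta> (2*k - 1))"
  have S: "sk \<theta> (k-1) \<le> S" "S \<le> sk \<theta> k" unfolding S_def using psi_on_piece[OF t] by simp_all
  have "\<bar>z t - \<Phi>\<bar> \<le> K * c * exp (- l * (S - s0)) * integral {\<theta> (2*k - 1)..t} (W k)"
    using transported_piece_bound[OF k order_refl S t, of s0] unfolding \<Phi>_def W_def S_def by simp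
  moreover have "\<bar>\<Phi>\<bar> \<le> exp (- l * (S - s0)) * (K * \<bar>z (\<theta> (2*k1 - 1))\<bar> + K * c * ts_integral \<theta> k1 W k (\<theta> (2*k - 1)))"
    using transported_chain_bound[OF k order_refl S] unfolding \<Phi>_def W_def s0_def by simp
  ultimately show ?thesis
    using ts_integral_split[of k1 W k t] unfolding S_def[symmetric] W_def[symmetric]
    by (simp add: algebra_simps abs_le_iff)
qed

end

end

section \<open>Gronwall inequality on the time scale\<close>

lemma integral_gronwall:
  fixes w :: "real \<Rightarrow> real"
  assumes D: "0 \<le> D" and w_cont: "continuous_on {l..b} w"
    and w_le: "\<And>x. x \<in> {l..b} \<Longrightarrow> w x \<le> R0 + D * integral {l..x} w"
    and t: "t \<in> {l..b}"
  shows "R0 + D * integral {l..t} w \<le> R0 * exp (D * (t - l))"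
proof -
  define R where "R = (\<lambda>x. R0 + D * integral {l..x} w)"
  have sub: "{l..t} \<subseteq> {l..b}" using t by auto
  have "- (R l * exp (- D * (l - l))) \<le> - (R t * exp (- D * (t - l)))"
  proof (rule has_real_derivative_nonneg_imp_le[where a=l and b=t
        and F="\<lambda>x. - (R x * exp (- D * (x - l)))" and F'="\<lambda>x. D * exp (- D * (x - l)) * (R x - w x)"])
    show "l \<le> t" using t by simp
  next
    fix x assume x: "x \<in> {l..t}"
    have "(R has_real_derivative D * w x) (at x within {l..t})"
      unfolding R_def using integral_has_real_derivative[OF continuous_on_subset[OF w_cont sub] x]
      by (auto intro!: derivative_eq_intros)
    then have "((\<lambda>x. - (R x * exp (- D * (x - l)))) has_real_derivative
        - (D * w x * exp (- D * (x - l)) + exp (- D * (x - l)) * (- D * 1) * R x)) (at x within {l..t})"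
      by (auto intro!: derivative_eq_intros)
    then show "((\<lambda>x. - (R x * exp (- D * (x - l)))) has_real_derivative
        D * exp (- D * (x - l)) * (R x - w x)) (at x within {l..t})"
      by (rule DERIV_cong) (simp add: algebra_simps)
    show "0 \<le> D * exp (- D * (x - l)) * (R x - w x)"
      using w_le[of x] x sub D unfolding R_def by simp
  qed
  then have "R t * exp (- D * (t - l)) * exp (D * (t - l)) \<le> R0 * exp (D * (t - l))"
    unfolding R_def by (simp add: mult_right_mono)
  then show ?thesis unfolding R_def mult.assoc exp_add[symmetric] by simp
qed

context time_scale
begin

context
  fixes A D :: real and w :: "int \<Rightarrow> real \<Rightarrow> real" and k1 :: int
  assumes A: "0 \<le> A" and D: "0 \<le> D"
    and w_cont: "\<And>j. k1 \<le> j \<Longrightarrow> continuous_on (piece \<theta> j) (w j)"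
    and w_le: "\<And>k t. k1 \<le> k \<Longrightarrow> t \<in> piece \<theta> k \<Longrightarrow> w k t \<le> A + D * ts_integral \<theta> k1 w k t"
begin

lemma ts_gronwall_piece:
  assumes k: "k1 \<le> k" and t: "t \<in> piece \<theta> k"
  shows "A + D * ts_integral \<theta> k1 w k t \<le> (A + D * ts_integral \<theta> k1 w k (\<theta> (2*k - 1))) * exp (D * (t - \<theta> (2*k - 1)))"
proof -
  define R0 where "R0 = A + D * ts_integral \<theta> k1 w k (\<theta> (2*k - 1))"
  have R_eq: "A + D * ts_integral \<theta> k1 w k x = R0 + D * integral {\<theta> (2*k - 1)..x} (w k)" for x
    unfolding R0_def using ts_integral_split[of k1 w k x] by (simp add: algebra_simps)
  have "R0 + D * integral {\<theta> (2*k - 1)..t} (w k) \<le> R0 * exp (D * (t - \<theta> (2*k - 1)))"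
  proof (rule integral_gronwall[OF D])
    show "continuous_on {\<theta> (2*k - 1)..\<theta> (2*k)} (w k)" using w_cont[OF k] unfolding piece_def .
    show "t \<in> {\<theta> (2*k - 1)..\<theta> (2*k)}" using t unfolding piece_def .
    show "w k x \<le> R0 + D * integral {\<theta> (2*k - 1)..x} (w k)" if "x \<in> {\<theta> (2*k - 1)..\<theta> (2*k)}" for x
      using w_le[OF k, of x] that unfolding piece_def R_eq by simp
  qed
  then show ?thesis unfolding R_eq[of t] R0_def .
qed

lemma ts_gronwall_jump:
  assumes k: "k1 \<le> k"
  shows "A + D * ts_integral \<theta> k1 w (k+1) (\<theta> (2*k + 1)) \<le> (1 + D * dlt \<theta> k) * (A + D * ts_integral \<theta> k1 w k (\<theta> (2*k)))"
proof -
  have "\<theta> (2*k) \<in> piece \<theta> k" unfolding piece_def by simp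
  then have "D * dlt \<theta> k * w k (\<theta> (2*k)) \<le> D * dlt \<theta> k * (A + D * ts_integral \<theta> k1 w k (\<theta> (2*k)))"
    using w_le[OF k] D dlt_pos[of k] by (intro mult_left_mono) simp_all
  then show ?thesis unfolding ts_integral_next_piece[OF k] by (simp add: algebra_simps)
qed

lemma ts_gronwall:
  assumes k: "k1 \<le> k" and t: "t \<in> piece \<theta> k"
  shows "w k t \<le> A * exp (D * (psi_on \<theta> k t - sk \<theta> (k1-1))) * (\<Prod>i\<in>{k1..<k}. 1 + D * dlt \<theta> i)"
proof -
  define s0 where "s0 = sk \<theta> (k1-1)"
  define R where "R = (\<lambda>k t. A + D * ts_integral \<theta> k1 w k t)"
  define P where "P = (\<lambda>k. \<Prod>i\<in>{k1..<k}. 1 + D * dlt \<theta> i)"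
  have exp_step: "exp (D * (sk \<theta> (j-1) - s0)) * exp (D * (t - \<theta> (2*j - 1))) = exp (D * (psi_on \<theta> j t - s0))" for j t
  proof -
    have "(sk \<theta> (j-1) - s0) + (t - \<theta> (2*j - 1)) = psi_on \<theta> j t - s0"
      using sk_eq_pred_add_eta[of j] unfolding eta_def psi_on_def by linarith
    then show ?thesis unfolding exp_add[symmetric] distrib_left[symmetric] by simp
  qed
  have start: "R j (\<theta> (2*j - 1)) \<le> A * exp (D * (sk \<theta> (j-1) - s0)) * P j" if "k1 \<le> j" for j
    using that
  proof (induction j rule: int_ge_induct)
    case base
    then show ?case unfolding R_def P_def s0_def by simp
  next
    case (step j)
    have q: "0 \<le> 1 + D * dlt \<theta> j" using D dlt_pos[of j] by simp
    have "{k1..<j+1} = insert j {k1..<j}" using step.hyps by auto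
    then have P: "P (j+1) = (1 + D * dlt \<theta> j) * P j" unfolding P_def by simp
    have "\<theta> (2*(j+1) - 1) = \<theta> (2*j + 1)" by (simp add: algebra_simps)
    then have "R (j+1) (\<theta> (2*(j+1) - 1)) \<le> (1 + D * dlt \<theta> j) * R j (\<theta> (2*j))"
      unfolding R_def using ts_gronwall_jump[OF step.hyps] by simp
    also have "\<dots> \<le> (1 + D * dlt \<theta> j) * (R j (\<theta> (2*j - 1)) * exp (D * (\<theta> (2*j) - \<theta> (2*j - 1))))"
      unfolding R_def using ts_gronwall_piece[OF step.hyps] q by (intro mult_left_mono) (simp_all add: piece_def)
    also have "\<dots> \<le> (1 + D * dlt \<theta> j) * (A * exp (D * (sk \<theta> (j-1) - s0)) * P j * exp (D * (\<theta> (2*j) - \<theta> (2*j - 1))))"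
      using step.IH q by (intro mult_left_mono mult_right_mono) simp_all
    also have "\<dots> = A * exp (D * (sk \<theta> (j + 1 - 1) - s0)) * P (j+1)"
      using exp_step[of j "\<theta> (2*j)"] unfolding P psi_on_right by (simp add: algebra_simps)
    finally show ?case .
  qed
  have "w k t \<le> R k t" using w_le[OF k t] unfolding R_def .
  also have "\<dots> \<le> R k (\<theta> (2*k - 1)) * exp (D * (t - \<theta> (2*k - 1)))"
    unfolding R_def by (rule ts_gronwall_piece[OF k t])
  also have "\<dots> \<le> A * exp (D * (sk \<theta> (k-1) - s0)) * P k * exp (D * (t - \<theta> (2*k - 1)))"
    using start[OF k] by (simp add: mult_right_mono)
  also have "\<dots> = A * exp (D * (psi_on \<theta> k t - s0)) * P k"
    using exp_step[of k t] by (simp add: algebra_simps)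
  finally show ?thesis unfolding P_def s0_def .
qed

end

lemma ts_integral_nonneg:
  assumes "\<And>j. k1 \<le> j \<Longrightarrow> continuous_on (piece \<theta> j) (w j)" and "\<And>j \<tau>. 0 \<le> w j \<tau>"
    and "k1 \<le> k" and "t \<in> piece \<theta> k"
  shows "0 \<le> ts_integral \<theta> k1 w k t"
proof -
  have "0 \<le> (\<Sum>i\<in>{k1..<k}. integral (piece \<theta> i) (w i) + dlt \<theta> i * w i (\<theta> (2*i)))"
  proof (rule sum_nonneg)
    fix i assume "i \<in> {k1..<k}"
    then have i: "k1 \<le> i" by simp
    have "0 \<le> integral (piece \<theta> i) (w i)"
      using assms(1)[OF i] assms(2) unfolding piece_def by (intro integral_nonneg integrable_continuous_interval) auto
    then show "0 \<le> integral (piece \<theta> i) (w i) + dlt \<theta> i * w i (\<theta> (2*i))"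
      using assms(2) dlt_pos[of i] by simp
  qed
  moreover have "0 \<le> integral {\<theta> (2*k - 1)..t} (w k)"
  proof (rule integral_nonneg)
    have "{\<theta> (2*k - 1)..t} \<subseteq> piece \<theta> k" using assms(4) unfolding piece_def by auto
    then show "w k integrable_on {\<theta> (2*k - 1)..t}"
      by (intro integrable_continuous_interval continuous_on_subset[OF assms(1)[OF assms(3)]])
  qed (use assms(2) in simp)
  ultimately show ?thesis unfolding ts_integral_def by (rule add_nonneg_nonneg)
qed

end

section \<open>Periodic time scales\<close>

locale periodic_time_scale = time_scale +
  fixes p :: nat and \<omega> :: real
  assumes \<theta>_periodic: "\<forall>k. \<theta> (k + 2 * int p) = \<theta> k + \<omega>" and \<omega>_pos: "0 < \<omega>"
begin

lemma period_pos: "1 \<le> p"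
  using \<theta>_periodic \<omega>_pos by (cases p) auto

lemma \<theta>_add_periods: "\<theta> (k + 2 * int p * q) = \<theta> k + \<omega> * of_int q"
proof (induction q rule: int_induct[where k=0])
  case base
  show ?case by simp
next
  case (step1 q)
  have "\<theta> (k + 2 * int p * (q + 1)) = \<theta> ((k + 2 * int p * q) + 2 * int p)" by (simp add: algebra_simps)
  also have "\<dots> = \<theta> (k + 2 * int p * q) + \<omega>" using \<theta>_periodic by blast
  finally show ?case using step1.IH by (simp add: algebra_simps)
next
  case (step2 q)
  have "\<theta> (k + 2 * int p * q) = \<theta> ((k + 2 * int p * (q - 1)) + 2 * int p)" by (simp add: algebra_simps)
  also have "\<dots> = \<theta> (k + 2 * int p * (q - 1)) + \<omega>" using \<theta>_periodic by blast
  finally show ?case using step2.IH by (simp add: algebra_simps)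
qed

lemma dlt_add_periods: "dlt \<theta> (k + int p * q) = dlt \<theta> k"
proof -
  have "\<theta> (2 * (k + int p * q) + 1) = \<theta> ((2*k + 1) + 2 * int p * q)"
    and "\<theta> (2 * (k + int p * q)) = \<theta> (2*k + 2 * int p * q)" by (simp_all add: algebra_simps)
  then show ?thesis unfolding dlt_def \<theta>_add_periods by simp
qed

lemma eta_add_period: "eta \<theta> (k + int p) = eta \<theta> k"
proof -
  have "\<theta> (2 * (k + int p) - 1) = \<theta> ((2*k - 1) + 2 * int p)"
    and "\<theta> (2 * (k + int p)) = \<theta> (2*k + 2 * int p)" by (simp_all add: algebra_simps)
  then show ?thesis unfolding eta_def using \<theta>_periodic by simp
qed

lemma dlt_le_dmax: "dlt \<theta> k \<le> dmax \<theta> p"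
proof -
  define r where "r = (k - 1) mod int p + 1"
  have p: "0 < int p" using period_pos by simp
  then have r: "r \<in> {1..int p}"
    unfolding r_def using pos_mod_bound[OF p, of "k-1"] pos_mod_sign[OF p, of "k-1"] by simp
  have "k = r + int p * ((k - 1) div int p)" unfolding r_def by (simp add: algebra_simps)
  then have "dlt \<theta> k = dlt \<theta> r" using dlt_add_periods[of r] by metis
  also have "\<dots> \<le> dmax \<theta> p" unfolding dmax_def using r by (intro Max_ge) auto
  finally show ?thesis .
qed

lemma psi_om_pos: "0 < psi_om \<theta> p"
  unfolding psi_om_def using eta_pos period_pos by (intro sum_pos) auto

lemma sk_add_period: "sk \<theta> (k + int p) = sk \<theta> k + psi_om \<theta> p"
proof -
  have shift: "sk \<theta> (i + int p) - sk \<theta> i = sk \<theta> (i - 1 + int p) - sk \<theta> (i - 1)" for i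
    using sk_eq_pred_add_eta[of "i + int p"] sk_eq_pred_add_eta[of i] eta_add_period[of i]
    by (simp add: algebra_simps)
  have "sk \<theta> (k + int p) - sk \<theta> k = sk \<theta> (int p) - sk \<theta> 0"
  proof (induction k rule: int_induct[where k=0])
    case (step1 i)
    then show ?case using shift[of "i+1"] by (simp add: add.commute add.left_commute)
  next
    case (step2 i)
    then show ?case using shift[of i] by simp
  qed simp
  moreover have "sk \<theta> (int q) = sk \<theta> 0 + sum (eta \<theta>) {1..int q}" for q
  proof (induction q)
    case (Suc q)
    have "int (Suc q) = int q + 1" by simp
    moreover have "{1..int q + 1} = insert (int q + 1) {1..int q}" by auto
    ultimately show ?case using Suc sk_succ[of "int q"] by (simp only:) simp
  qed simp
  ultimately show ?thesis unfolding psi_om_def by simp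
qed

lemma sk_add_periods: "sk \<theta> (k + int p * int q) = sk \<theta> k + q * psi_om \<theta> p"
proof (induction q)
  case (Suc q)
  have "sk \<theta> (k + int p * int (Suc q)) = sk \<theta> ((k + int p * int q) + int p)" by (simp add: algebra_simps)
  with Suc show ?case unfolding sk_add_period by (simp add: algebra_simps)
qed simp

lemma index_gap_le:
  assumes "k1 \<le> k" and "sk \<theta> (k-1) \<le> x"
  shows "real_of_int (k - k1) \<le> real p * ((x - sk \<theta> (k1-1)) / psi_om \<theta> p + 1)"
proof -
  define q where "q = nat ((k - k1) div int p)"
  have p: "0 < int p" using period_pos by simp
  have k: "k - k1 = int p * int q + (k - k1) mod int p"
    unfolding q_def using assms(1) p by (simp add: pos_imp_zdiv_nonneg_iff)
  have r: "0 \<le> (k - k1) mod int p" "(k - k1) mod int p < int p"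
    using pos_mod_sign[OF p] pos_mod_bound[OF p] by auto
  have "sk \<theta> (k1 - 1 + int p * int q) \<le> sk \<theta> (k-1)" using k r by simp
  then have "sk \<theta> (k1-1) + q * psi_om \<theta> p \<le> x" using assms(2) unfolding sk_add_periods by linarith
  then have "real p * q \<le> real p * ((x - sk \<theta> (k1-1)) / psi_om \<theta> p)"
    using psi_om_pos by (intro mult_left_mono) (simp_all add: field_simps)
  moreover have "real_of_int (k - k1) \<le> real p * q + real p"
  proof -
    have "k - k1 \<le> int p * int q + int p" using k r by linarith
    then show ?thesis by (metis of_int_le_iff of_int_add of_int_mult of_int_of_nat_eq of_nat_mult)
  qed
  ultimately show ?thesis by (simp add: distrib_left)
qed

lemma jump_product_le_exp:
  assumes D: "0 \<le> D" and k: "k1 \<le> k" and t: "t \<in> piece \<theta> k"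
  shows "(\<Prod>i\<in>{k1..<k}. 1 + D * dlt \<theta> i)
    \<le> exp (real p * ((psi_on \<theta> k t - sk \<theta> (k1-1)) / psi_om \<theta> p + 1) * ln (1 + dmax \<theta> p * D))"
proof -
  define B where "B = 1 + dmax \<theta> p * D"
  have B: "1 \<le> B" unfolding B_def using D dlt_le_dmax[of 0] dlt_pos[of 0] by simp
  have "(\<Prod>i\<in>{k1..<k}. 1 + D * dlt \<theta> i) \<le> (\<Prod>i\<in>{k1..<k}. B)"
  proof (rule prod_mono)
    fix i
    have "D * dlt \<theta> i \<le> D * dmax \<theta> p" using dlt_le_dmax[of i] D by (rule mult_left_mono)
    then show "0 \<le> 1 + D * dlt \<theta> i \<and> 1 + D * dlt \<theta> i \<le> B"
      unfolding B_def using D dlt_pos[of i] by (simp add: mult.commute)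
  qed
  also have "\<dots> = exp (real (nat (k - k1)) * ln B)"
    using B by (simp add: exp_of_nat_mult[symmetric] ln_realpow[symmetric])
  also have "\<dots> = exp (real_of_int (k - k1) * ln B)" using k by simp
  also have "\<dots> \<le> exp (real p * ((psi_on \<theta> k t - sk \<theta> (k1-1)) / psi_om \<theta> p + 1) * ln B)"
    using index_gap_le[OF k psi_on_piece(1)[OF t]] B by (simp add: mult_right_mono)
  finally show ?thesis unfolding B_def .
qed

lemma T0_tendsto_zero_of_exp_bound:
  assumes \<mu>: "\<mu> < 0" and B: "0 \<le> B"
    and bound: "\<And>k t. k1 \<le> k \<Longrightarrow> t \<in> piece \<theta> k \<Longrightarrow> N t \<le> B * exp (\<mu> * (psi_on \<theta> k t - sk \<theta> (k1-1)))"
  shows "\<forall>\<epsilon>>0. \<exists>T. \<forall>t\<in>T0 \<theta>. T \<le> t \<longrightarrow> N t < \<epsilon>"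
proof (intro allI impI)
  fix \<epsilon> :: real assume \<epsilon>: "0 < \<epsilon>"
  define X where "X = max 0 (ln (\<epsilon> / (B + 1)) / \<mu>) + 1"
  have "ln (\<epsilon> / (B + 1)) / \<mu> < X" unfolding X_def by simp
  then have "\<mu> * X < ln (\<epsilon> / (B + 1))"
    using \<mu> by (simp add: neg_divide_less_eq mult.commute)
  then have "exp (\<mu> * X) < \<epsilon> / (B + 1)" using \<epsilon> B by (metis add_nonneg_pos divide_pos_pos exp_less_cancel_iff exp_ln zero_less_one)
  then have small: "(B + 1) * exp (\<mu> * X) < \<epsilon>" using B by (simp add: field_simps)
  define M where "M = nat \<lceil>X / psi_om \<theta> p\<rceil>"
  have "X / psi_om \<theta> p \<le> real M" unfolding M_def by linarith
  then have MX: "X \<le> real M * psi_om \<theta> p" using psi_om_pos by (simp add: field_simps)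
  show "\<exists>T. \<forall>t\<in>T0 \<theta>. T \<le> t \<longrightarrow> N t < \<epsilon>"
  proof (intro exI ballI impI)
    fix t assume "t \<in> T0 \<theta>" and tT: "\<theta> (2 * (k1 + int p * int M)) \<le> t"
    then obtain k where t: "t \<in> piece \<theta> k" unfolding T0_eq_Union_piece by blast
    have "k1 + int p * int M \<le> k"
    proof (rule ccontr)
      assume "\<not> k1 + int p * int M \<le> k"
      then have "\<theta> (2*k) < \<theta> (2 * (k1 + int p * int M))" by simp
      moreover have "t \<le> \<theta> (2*k)" using t unfolding piece_def by simp
      ultimately show False using tT by linarith
    qed
    moreover have "0 \<le> int p * int M" by simp
    ultimately have k: "k1 \<le> k" by linarith
    have "sk \<theta> (k1 - 1 + int p * int M) \<le> sk \<theta> (k-1)" using \<open>k1 + int p * int M \<le> k\<close> by simp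
    then have "X \<le> psi_on \<theta> k t - sk \<theta> (k1-1)"
      using MX psi_on_piece(1)[OF t] unfolding sk_add_periods by linarith
    then have "\<mu> * (psi_on \<theta> k t - sk \<theta> (k1-1)) \<le> \<mu> * X"
      using \<mu> by (simp add: mult_le_cancel_left_neg)
    then have "N t \<le> B * exp (\<mu> * X)"
      using bound[OF k t] B by (meson exp_le_cancel_iff mult_left_mono order_trans)
    also have "\<dots> < (B + 1) * exp (\<mu> * X)" by (simp add: distrib_right)
    also have "\<dots> < \<epsilon>" by (rule small)
    finally show "N t < \<epsilon>" .
  qed
qed

lemma tendsto_zero_of_ts_integral_inequality:
  assumes A: "0 \<le> A" and D: "0 \<le> D"
    and rate: "- l + D + real p / psi_om \<theta> p * ln (1 + dmax \<theta> p * D) < 0"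
    and N_cont: "\<And>j. k1 \<le> j \<Longrightarrow> continuous_on (piece \<theta> j) N"
    and N_le: "\<And>k t. k1 \<le> k \<Longrightarrow> t \<in> piece \<theta> k \<Longrightarrow> N t \<le> exp (- l * (psi_on \<theta> k t - sk \<theta> (k1-1))) *
        (A + D * ts_integral \<theta> k1 (\<lambda>j \<tau>. exp (l * (psi_on \<theta> j \<tau> - sk \<theta> (k1-1))) * N \<tau>) k t)"
  shows "\<forall>\<epsilon>>0. \<exists>T. \<forall>t\<in>T0 \<theta>. T \<le> t \<longrightarrow> N t < \<epsilon>"
proof -
  define s0 where "s0 = sk \<theta> (k1-1)"
  define W where "W = (\<lambda>j \<tau>. exp (l * (psi_on \<theta> j \<tau> - s0)) * N \<tau>)"
  define L where "L = ln (1 + dmax \<theta> p * D)"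
  define \<mu> where "\<mu> = - l + D + real p / psi_om \<theta> p * L"
  have W_le: "W k t \<le> A + D * ts_integral \<theta> k1 W k t" if "k1 \<le> k" "t \<in> piece \<theta> k" for k t
  proof -
    have "W k t \<le> exp (l * (psi_on \<theta> k t - s0)) * (exp (- l * (psi_on \<theta> k t - s0)) * (A + D * ts_integral \<theta> k1 W k t))"
      unfolding W_def using N_le[OF that] unfolding s0_def[symmetric] W_def[symmetric] by (simp add: mult_left_mono)
    also have "\<dots> = A + D * ts_integral \<theta> k1 W k t" by (simp add: mult.assoc[symmetric] exp_add[symmetric])
    finally show ?thesis .
  qed
  have bound: "N t \<le> A * exp (real p * L) * exp (\<mu> * (psi_on \<theta> k t - sk \<theta> (k1-1)))" if k: "k1 \<le> k" and t: "t \<in> piece \<theta> k" for k t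
  proof -
    define u where "u = psi_on \<theta> k t - s0"
    have W_cont: "continuous_on (piece \<theta> j) (W j)" if "k1 \<le> j" for j
      unfolding W_def psi_on_def by (intro continuous_intros N_cont[OF that])
    have "N t = exp (- l * u) * W k t" unfolding W_def u_def by (simp add: mult.assoc[symmetric] exp_add[symmetric])
    also have "\<dots> \<le> exp (- l * u) * (A * exp (D * u) * (\<Prod>i\<in>{k1..<k}. 1 + D * dlt \<theta> i))"
      using ts_gronwall[OF A D W_cont W_le k t] unfolding u_def s0_def by (simp add: mult_left_mono)
    also have "\<dots> \<le> exp (- l * u) * (A * exp (D * u) * exp (real p * (u / psi_om \<theta> p + 1) * L))"
      using jump_product_le_exp[OF D k t] A unfolding u_def s0_def L_def by (intro mult_left_mono) simp_all
    also have "\<dots> = A * exp (- l * u + D * u + real p * (u / psi_om \<theta> p + 1) * L)"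
      by (simp only: exp_add) (simp add: mult_ac)
    also have "- l * u + D * u + real p * (u / psi_om \<theta> p + 1) * L = real p * L + \<mu> * u"
      unfolding \<mu>_def using psi_om_pos by (simp add: field_simps)
    finally show ?thesis unfolding u_def s0_def by (simp add: exp_add mult.assoc)
  qed
  have "\<mu> < 0" using rate unfolding \<mu>_def L_def .
  then show ?thesis using A by (intro T0_tendsto_zero_of_exp_bound[OF _ _ bound]) simp_all
qed

end

section \<open>The network\<close>

lemma continuous_on_Max:
  fixes g :: "'i \<Rightarrow> 'a::topological_space \<Rightarrow> real"
  assumes "finite I" "I \<noteq> {}" "\<And>i. i \<in> I \<Longrightarrow> continuous_on S (g i)"
  shows "continuous_on S (\<lambda>t. Max ((\<lambda>i. g i t) ` I))"
  using assms
proof (induction I rule: finite_ne_induct)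
  case (insert i I)
  have "continuous_on S (\<lambda>t. max (g i t) (Max ((\<lambda>i. g i t) ` I)))"
    using insert by (intro continuous_on_max) auto
  then show ?case using insert by simp
qed simp

lemma finite_Icells: "finite (Icells m n)"
  unfolding Icells_def by simp

lemma Icells_nonempty: "1 \<le> m \<Longrightarrow> 1 \<le> n \<Longrightarrow> Icells m n \<noteq> {}"
  unfolding Icells_def by auto

lemma abs_le_vnorm: "ij \<in> Icells m n \<Longrightarrow> \<bar>v ij\<bar> \<le> vnorm m n v"
  unfolding vnorm_def using finite_Icells by (intro Max_ge) auto

lemma vnorm_le: "Icells m n \<noteq> {} \<Longrightarrow> (\<And>ij. ij \<in> Icells m n \<Longrightarrow> \<bar>v ij\<bar> \<le> b) \<Longrightarrow> vnorm m n v \<le> b"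
  unfolding vnorm_def using finite_Icells by (subst Max_le_iff) auto

lemma continuous_on_vnorm:
  "Icells m n \<noteq> {} \<Longrightarrow> (\<And>ij. ij \<in> Icells m n \<Longrightarrow> continuous_on S (\<lambda>t. v t ij))
    \<Longrightarrow> continuous_on S (\<lambda>t. vnorm m n (v t))"
  unfolding vnorm_def using finite_Icells by (intro continuous_on_Max continuous_on_rabs) auto

definition coupling :: "nat \<Rightarrow> nat \<Rightarrow> nat \<Rightarrow> (nat \<times> nat \<Rightarrow> nat \<times> nat \<Rightarrow> real) \<Rightarrow> (real \<Rightarrow> real)
    \<Rightarrow> (nat \<times> nat \<Rightarrow> real) \<Rightarrow> nat \<times> nat \<Rightarrow> real" where
  "coupling m n r C f v ij = (\<Sum>hl\<in>nbhd m n r ij. C ij hl * f (v hl) * v ij)"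

lemma coupling_diff_bound:
  assumes C: "\<forall>hl\<in>nbhd m n r ij. 0 \<le> C ij hl"
    and f_bound: "\<forall>s. \<bar>f s\<bar> \<le> Mf" and f_lip: "\<forall>s1 s2. \<bar>f s1 - f s2\<bar> \<le> Lf * \<bar>s1 - s2\<bar>" and Lf: "0 \<le> Lf"
    and v: "\<bar>v ij\<bar> \<le> H" and uv: "\<forall>hl\<in>insert ij (nbhd m n r ij). \<bar>u hl - v hl\<bar> \<le> N"
  shows "\<bar>coupling m n r C f u ij - coupling m n r C f v ij\<bar> \<le> (Mf + H * Lf) * Csum m n r C ij * N"
proof -
  have N: "0 \<le> N" using uv by (meson abs_ge_zero insertI1 order_trans)
  have summand_bound: "\<bar>f (u hl) * u ij - f (v hl) * v ij\<bar> \<le> (Mf + H * Lf) * N" if hl: "hl \<in> nbhd m n r ij" for hl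
  proof -
    have "f (u hl) * u ij - f (v hl) * v ij = f (u hl) * (u ij - v ij) + (f (u hl) - f (v hl)) * v ij"
      by (simp add: algebra_simps)
    also have "\<bar>\<dots>\<bar> \<le> \<bar>f (u hl)\<bar> * \<bar>u ij - v ij\<bar> + \<bar>f (u hl) - f (v hl)\<bar> * \<bar>v ij\<bar>"
      by (metis abs_mult abs_triangle_ineq)
    also have "\<dots> \<le> Mf * N + (Lf * N) * H"
    proof (rule add_mono)
      show "\<bar>f (u hl)\<bar> * \<bar>u ij - v ij\<bar> \<le> Mf * N"
        using f_bound uv N by (intro mult_mono) auto
      have "\<bar>f (u hl) - f (v hl)\<bar> \<le> Lf * N"
        using f_lip uv hl Lf by (meson insertI2 mult_left_mono order_trans)
      then show "\<bar>f (u hl) - f (v hl)\<bar> * \<bar>v ij\<bar> \<le> (Lf * N) * H"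
        using v Lf N by (intro mult_mono) auto
    qed
    finally show ?thesis by (simp add: algebra_simps)
  qed
  have "coupling m n r C f u ij - coupling m n r C f v ij
      = (\<Sum>hl\<in>nbhd m n r ij. C ij hl * (f (u hl) * u ij - f (v hl) * v ij))"
    unfolding coupling_def by (simp add: sum_subtractf[symmetric] algebra_simps)
  also have "\<bar>\<dots>\<bar> \<le> (\<Sum>hl\<in>nbhd m n r ij. C ij hl * ((Mf + H * Lf) * N))"
    using C summand_bound by (intro order_trans[OF sum_abs] sum_mono) (simp add: abs_mult mult_left_mono)
  also have "\<dots> = (Mf + H * Lf) * Csum m n r C ij * N"
    unfolding Csum_def sum_distrib_right[symmetric] by (simp only: mult_ac)
  finally show ?thesis .
qed

lemma network_sol_deriv:
  assumes "network_sol m n r a C f \<theta> \<zeta> D x" "ij \<in> Icells m n" "piece \<theta> j \<subseteq> D" "\<tau> \<in> piece \<theta> j"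
  shows "((\<lambda>s. x s ij) has_real_derivative - a ij * x \<tau> ij - coupling m n r C f (x \<tau>) ij + \<zeta> j ij)
    (at \<tau> within piece \<theta> j)"
proof -
  have "\<forall>t\<in>{\<theta> (2*j - 1)..\<theta> (2*j)} \<inter> D. ((\<lambda>s. x s ij) has_real_derivative
      - a ij * x t ij - (\<Sum>hl\<in>nbhd m n r ij. C ij hl * f (x t hl) * x t ij) + \<zeta> j ij)
      (at t within {\<theta> (2*j - 1)..\<theta> (2*j)} \<inter> D)"
    using assms(1,2) unfolding network_sol_def Let_def by blast
  moreover have "{\<theta> (2*j - 1)..\<theta> (2*j)} \<inter> D = piece \<theta> j" using assms(3) unfolding piece_def by auto
  ultimately show ?thesis using assms(4) unfolding coupling_def by simp
qed

lemma network_sol_jump: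
  assumes "network_sol m n r a C f \<theta> \<zeta> D x" "ij \<in> Icells m n" "\<theta> (2*j) \<in> D"
  shows "x (\<theta> (2*j + 1)) ij = (1 - dlt \<theta> j * a ij) * x (\<theta> (2*j)) ij
    - dlt \<theta> j * coupling m n r C f (x (\<theta> (2*j))) ij + dlt \<theta> j * \<zeta> j ij"
  using assms unfolding network_sol_def coupling_def by blast

locale network_pair = time_scale +
  fixes m n r :: nat and a :: "nat \<times> nat \<Rightarrow> real" and C :: "nat \<times> nat \<Rightarrow> nat \<times> nat \<Rightarrow> real"
    and f :: "real \<Rightarrow> real" and \<zeta> :: "int \<Rightarrow> nat \<times> nat \<Rightarrow> real"
    and \<phi> x :: "real \<Rightarrow> nat \<times> nat \<Rightarrow> real" and Dx :: "real set" and H Mf Lf :: real and k1 :: int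
  assumes cells: "Icells m n \<noteq> {}"
    and C_nonneg: "\<forall>ij\<in>Icells m n. \<forall>hl\<in>Icells m n. 0 \<le> C ij hl"
    and f_bound: "\<forall>s. \<bar>f s\<bar> \<le> Mf" and f_lip: "\<forall>s1 s2. \<bar>f s1 - f s2\<bar> \<le> Lf * \<bar>s1 - s2\<bar>" and Lf: "0 \<le> Lf"
    and \<phi>_sol: "network_sol m n r a C f \<theta> \<zeta> UNIV \<phi>" and \<phi>_bound: "\<forall>t\<in>T0 \<theta>. vnorm m n (\<phi> t) \<le> H"
    and x_sol: "network_sol m n r a C f \<theta> \<zeta> Dx x" and x_domain: "\<And>j. k1 \<le> j \<Longrightarrow> piece \<theta> j \<subseteq> Dx"
begin

lemma coupling_gain_nonneg: "0 \<le> Mf + H * Lf"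
proof -
  obtain ij where ij: "ij \<in> Icells m n" using cells by blast
  have "\<theta> 0 \<in> piece \<theta> 0" unfolding piece_def by simp
  then have "vnorm m n (\<phi> (\<theta> 0)) \<le> H" using \<phi>_bound piece_subset_T0 by blast
  then have "0 \<le> H" using abs_le_vnorm[OF ij, of "\<phi> (\<theta> 0)"] by linarith
  moreover have "0 \<le> Mf" using f_bound by (meson abs_ge_zero order_trans)
  ultimately show ?thesis using Lf by simp
qed

lemma Csum_nonneg: "ij \<in> Icells m n \<Longrightarrow> 0 \<le> Csum m n r C ij"
  unfolding Csum_def nbhd_def using C_nonneg by (intro sum_nonneg) auto

lemma network_diff_deriv:
  assumes "ij \<in> Icells m n" "k1 \<le> j" "\<tau> \<in> piece \<theta> j"
  shows "((\<lambda>s. x s ij - \<phi> s ij) has_real_derivative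
      - a ij * (x \<tau> ij - \<phi> \<tau> ij) - (coupling m n r C f (x \<tau>) ij - coupling m n r C f (\<phi> \<tau>) ij))
    (at \<tau> within piece \<theta> j)"
  using DERIV_diff[OF network_sol_deriv[OF x_sol assms(1) x_domain[OF assms(2)] assms(3)]
      network_sol_deriv[OF \<phi>_sol assms(1) subset_UNIV assms(3)]]
  by (rule DERIV_cong) (simp add: algebra_simps)

lemma network_diff_jump:
  assumes "ij \<in> Icells m n" "k1 \<le> j"
  shows "x (\<theta> (2*j + 1)) ij - \<phi> (\<theta> (2*j + 1)) ij = (1 - dlt \<theta> j * a ij) * (x (\<theta> (2*j)) ij - \<phi> (\<theta> (2*j)) ij)
    - dlt \<theta> j * (coupling m n r C f (x (\<theta> (2*j))) ij - coupling m n r C f (\<phi> (\<theta> (2*j))) ij)"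
proof -
  have "\<theta> (2*j) \<in> Dx" using x_domain[OF assms(2)] unfolding piece_def by auto
  then show ?thesis
    unfolding network_sol_jump[OF x_sol assms(1) \<open>\<theta> (2*j) \<in> Dx\<close>] network_sol_jump[OF \<phi>_sol assms(1) UNIV_I]
    by (simp add: algebra_simps)
qed

lemma coupling_diff_le_vnorm:
  assumes "ij \<in> Icells m n" "\<tau> \<in> T0 \<theta>"
  shows "\<bar>coupling m n r C f (x \<tau>) ij - coupling m n r C f (\<phi> \<tau>) ij\<bar>
    \<le> (Mf + H * Lf) * Csum m n r C ij * vnorm m n (x \<tau> - \<phi> \<tau>)"
proof (rule coupling_diff_bound[OF _ f_bound f_lip Lf])
  have nbhd: "nbhd m n r ij \<subseteq> Icells m n" unfolding nbhd_def by auto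
  then show "\<forall>hl\<in>nbhd m n r ij. 0 \<le> C ij hl" using C_nonneg assms(1) by blast
  show "\<bar>\<phi> \<tau> ij\<bar> \<le> H" using abs_le_vnorm[OF assms(1)] \<phi>_bound assms(2) by (meson order_trans)
  show "\<forall>hl\<in>insert ij (nbhd m n r ij). \<bar>x \<tau> hl - \<phi> \<tau> hl\<bar> \<le> vnorm m n (x \<tau> - \<phi> \<tau>)"
    using abs_le_vnorm[of _ m n "x \<tau> - \<phi> \<tau>"] nbhd assms(1) by auto
qed

lemma continuous_on_network_diff:
  "k1 \<le> j \<Longrightarrow> continuous_on (piece \<theta> j) (\<lambda>t. vnorm m n (x t - \<phi> t))"
proof -
  assume j: "k1 \<le> j"
  have "continuous_on (piece \<theta> j) (\<lambda>t. (x t - \<phi> t) ij)" if "ij \<in> Icells m n" for ij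
    unfolding continuous_on_eq_continuous_within fun_diff_def
    using network_diff_deriv[OF that j] DERIV_continuous by blast
  then show ?thesis using cells by (rule continuous_on_vnorm[rotated])
qed

lemma network_diff_ts_integral_inequality:
  assumes K: "\<forall>ij\<in>Icells m n. 0 \<le> K ij \<and> K ij \<le> Kmax \<and>
      (\<forall>s \<sigma>. \<sigma> \<le> s \<longrightarrow> \<bar>uu \<theta> (a ij) s \<sigma>\<bar> \<le> K ij * exp (- l * (s - \<sigma>)))"
    and D: "\<forall>ij\<in>Icells m n. K ij * ((Mf + H * Lf) * Csum m n r C ij) \<le> D"
    and k: "k1 \<le> k" and t: "t \<in> piece \<theta> k"
  defines "N \<equiv> \<lambda>t. vnorm m n (x t - \<phi> t)" and "s0 \<equiv> sk \<theta> (k1-1)"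
  shows "N t \<le> exp (- l * (psi_on \<theta> k t - s0)) *
    (Kmax * N (\<theta> (2*k1 - 1)) + D * ts_integral \<theta> k1 (\<lambda>j \<tau>. exp (l * (psi_on \<theta> j \<tau> - s0)) * N \<tau>) k t)"
proof -
  define I where "I = ts_integral \<theta> k1 (\<lambda>j \<tau>. exp (l * (psi_on \<theta> j \<tau> - s0)) * N \<tau>) k t"
  obtain ij0 where ij0: "ij0 \<in> Icells m n" using cells by blast
  have N_nonneg: "0 \<le> N \<tau>" for \<tau> unfolding N_def using abs_le_vnorm[OF ij0] by (meson abs_ge_zero order_trans)
  have N_cont: "continuous_on (piece \<theta> j) N" if "k1 \<le> j" for j
    unfolding N_def using continuous_on_network_diff[OF that] .
  have "0 \<le> I" unfolding I_def using N_nonneg k t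
    by (intro ts_integral_nonneg) (auto simp: psi_on_def intro!: continuous_intros N_cont)
  have component: "\<bar>x t ij - \<phi> t ij\<bar> \<le> exp (- l * (psi_on \<theta> k t - s0)) * (Kmax * N (\<theta> (2*k1 - 1)) + D * I)"
    if ij: "ij \<in> Icells m n" for ij
  proof -
    define c where "c = (Mf + H * Lf) * Csum m n r C ij"
    have c: "0 \<le> c" unfolding c_def using coupling_gain_nonneg Csum_nonneg[OF ij] by simp
    have Kij: "0 \<le> K ij" "K ij \<le> Kmax" using K ij by auto
    have "\<bar>x t ij - \<phi> t ij\<bar> \<le> exp (- l * (psi_on \<theta> k t - s0)) *
        (K ij * \<bar>x (\<theta> (2*k1 - 1)) ij - \<phi> (\<theta> (2*k1 - 1)) ij\<bar> + K ij * c * I)"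
      unfolding I_def s0_def
    proof (rule variation_of_constants_bound[where z="\<lambda>s. x s ij - \<phi> s ij"
          and G="\<lambda>s. coupling m n r C f (x s) ij - coupling m n r C f (\<phi> s) ij", OF _ Kij(1) c _ _ _ N_cont k t])
      show "\<forall>s \<sigma>. \<sigma> \<le> s \<longrightarrow> \<bar>uu \<theta> (a ij) s \<sigma>\<bar> \<le> K ij * exp (- l * (s - \<sigma>))" using K ij by blast
      show "((\<lambda>s. x s ij - \<phi> s ij) has_real_derivative
          - a ij * (x \<tau> ij - \<phi> \<tau> ij) - (coupling m n r C f (x \<tau>) ij - coupling m n r C f (\<phi> \<tau>) ij))
          (at \<tau> within piece \<theta> j)" if "k1 \<le> j" "\<tau> \<in> piece \<theta> j" for j \<tau>
        by (rule network_diff_deriv[OF ij that])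
      show "x (\<theta> (2*j + 1)) ij - \<phi> (\<theta> (2*j + 1)) ij = (1 - dlt \<theta> j * a ij) * (x (\<theta> (2*j)) ij - \<phi> (\<theta> (2*j)) ij)
          - dlt \<theta> j * (coupling m n r C f (x (\<theta> (2*j))) ij - coupling m n r C f (\<phi> (\<theta> (2*j))) ij)"
        if "k1 \<le> j" for j
        by (rule network_diff_jump[OF ij that])
      show "\<bar>coupling m n r C f (x \<tau>) ij - coupling m n r C f (\<phi> \<tau>) ij\<bar> \<le> c * N \<tau>"
        if "k1 \<le> j" "\<tau> \<in> piece \<theta> j" for j \<tau>
        unfolding c_def N_def using coupling_diff_le_vnorm[OF ij] piece_subset_T0 that(2) by blast
    qed
    also have "\<dots> \<le> exp (- l * (psi_on \<theta> k t - s0)) * (Kmax * N (\<theta> (2*k1 - 1)) + D * I)"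
    proof (intro mult_left_mono add_mono)
      show "K ij * \<bar>x (\<theta> (2*k1 - 1)) ij - \<phi> (\<theta> (2*k1 - 1)) ij\<bar> \<le> Kmax * N (\<theta> (2*k1 - 1))"
        unfolding N_def using Kij abs_le_vnorm[OF ij, of "x (\<theta> (2*k1 - 1)) - \<phi> (\<theta> (2*k1 - 1))"]
        by (intro mult_mono) auto
      show "K ij * c * I \<le> D * I" using D ij \<open>0 \<le> I\<close> unfolding c_def by (intro mult_right_mono) auto
    qed simp
    finally show ?thesis .
  qed
  have "N t = vnorm m n (x t - \<phi> t)" unfolding N_def ..
  also have "\<dots> \<le> exp (- l * (psi_on \<theta> k t - s0)) * (Kmax * N (\<theta> (2*k1 - 1)) + D * I)"
    using cells by (rule vnorm_le) (use component in simp)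
  finally show ?thesis unfolding I_def .
qed

end

lemma K_Csum_le_dbar:
  assumes "ij \<in> Icells m n" and "0 \<le> Mf + H0 m n r \<theta> p K a C \<Lambda> F Mf * Lf"
  shows "K ij * ((Mf + H0 m n r \<theta> p K a C \<Lambda> F Mf * Lf) * Csum m n r C ij) \<le> dbar m n r \<theta> p K a C \<Lambda> F Mf Lf"
proof -
  have "K ij * Csum m n r C ij \<le> Max ((\<lambda>ij. K ij * Csum m n r C ij) ` Icells m n)"
    using assms(1) finite_Icells by (intro Max_ge) auto
  then have "(Mf + H0 m n r \<theta> p K a C \<Lambda> F Mf * Lf) * (K ij * Csum m n r C ij)
      \<le> (Mf + H0 m n r \<theta> p K a C \<Lambda> F Mf * Lf) * Max ((\<lambda>ij. K ij * Csum m n r C ij) ` Icells m n)"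
    using assms(2) by (rule mult_left_mono)
  then show ?thesis unfolding dbar_def by (simp add: mult_ac)
qed

lemma dbar_nonneg:
  assumes "Icells m n \<noteq> {}" and "\<forall>ij\<in>Icells m n. 0 \<le> K ij \<and> 0 \<le> Csum m n r C ij"
    and "0 \<le> Mf + H0 m n r \<theta> p K a C \<Lambda> F Mf * Lf"
  shows "0 \<le> dbar m n r \<theta> p K a C \<Lambda> F Mf Lf"
proof -
  obtain ij where ij: "ij \<in> Icells m n" using assms(1) by blast
  then have "0 \<le> K ij * ((Mf + H0 m n r \<theta> p K a C \<Lambda> F Mf * Lf) * Csum m n r C ij)"
    using assms(2,3) by simp
  then show ?thesis using K_Csum_le_dbar[OF ij assms(3)] by linarith
qed

lemma cauchy_bound_lam_min:
  assumes "\<forall>ij\<in>Icells m n. 0 < K ij \<and>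
      (\<forall>s \<sigma>. \<sigma> \<le> s \<longrightarrow> \<bar>uu \<theta> (a ij) s \<sigma>\<bar> \<le> K ij * exp (- lam \<theta> p (a ij) * (s - \<sigma>)))"
  shows "\<forall>ij\<in>Icells m n. 0 \<le> K ij \<and> K ij \<le> Max (K ` Icells m n) \<and>
      (\<forall>s \<sigma>. \<sigma> \<le> s \<longrightarrow> \<bar>uu \<theta> (a ij) s \<sigma>\<bar> \<le> K ij * exp (- lam_min m n \<theta> p a * (s - \<sigma>)))"
proof (intro ballI conjI allI impI)
  fix ij and s \<sigma> :: real assume ij: "ij \<in> Icells m n" and "\<sigma> \<le> s"
  have "lam_min m n \<theta> p a \<le> lam \<theta> p (a ij)"
    unfolding lam_min_def using ij finite_Icells by (intro Min_le) auto
  then have "exp (- lam \<theta> p (a ij) * (s - \<sigma>)) \<le> exp (- lam_min m n \<theta> p a * (s - \<sigma>))"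
    using \<open>\<sigma> \<le> s\<close> by (simp add: mult_right_mono)
  then show "\<bar>uu \<theta> (a ij) s \<sigma>\<bar> \<le> K ij * exp (- lam_min m n \<theta> p a * (s - \<sigma>))"
    using assms ij \<open>\<sigma> \<le> s\<close> by (meson less_imp_le mult_left_mono order_trans)
qed (use assms finite_Icells in \<open>auto simp: less_imp_le\<close>)

theorem lemma2:
  fixes m n r p :: nat and a K :: "nat \<times> nat \<Rightarrow> real"
    and C :: "nat \<times> nat \<Rightarrow> nat \<times> nat \<Rightarrow> real" and f :: "real \<Rightarrow> real"
    and \<theta> :: "int \<Rightarrow> real" and \<omega> Mf Lf t0 :: real
    and \<Lambda> :: "(nat \<times> nat \<Rightarrow> real) set"
    and F :: "(nat \<times> nat \<Rightarrow> real) \<Rightarrow> (nat \<times> nat \<Rightarrow> real)"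
    and \<zeta> :: "int \<Rightarrow> nat \<times> nat \<Rightarrow> real"
    and \<phi> x :: "real \<Rightarrow> nat \<times> nat \<Rightarrow> real"
  assumes mn: "1 \<le> m" "1 \<le> n"
    and a_pos: "\<forall>ij\<in>Icells m n. 0 < a ij"
    and C_nonneg: "\<forall>ij\<in>Icells m n. \<forall>hl\<in>Icells m n. 0 \<le> C ij hl"
    and f_cont: "continuous_on UNIV f"
    and \<theta>_mono: "strict_mono \<theta>" and \<theta>_0: "\<theta> (-1) < 0" "0 < \<theta> 0"
    and \<omega>_pos: "0 < \<omega>" and \<theta>_per: "\<forall>k. \<theta> (k + 2 * int p) = \<theta> k + \<omega>"
    and \<Lambda>: "\<Lambda> \<subseteq> Rmn m n" "compact \<Lambda>" "F ` \<Lambda> \<subseteq> \<Lambda>" "continuous_on \<Lambda> F"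
    and C1: "\<forall>ij\<in>Icells m n. \<forall>k. dlt \<theta> k * a ij \<noteq> 1"
    and C2: "0 < lam_min m n \<theta> p a"
    and C3: "0 < Mf" "\<forall>s. \<bar>f s\<bar> \<le> Mf"
    and C4: "0 < Lf" "\<forall>s1 s2. \<bar>f s1 - f s2\<bar> \<le> Lf * \<bar>s1 - s2\<bar>"
    and K: "\<forall>ij\<in>Icells m n. 0 < K ij \<and>
              (\<forall>s \<tau>. \<tau> \<le> s \<longrightarrow> \<bar>uu \<theta> (a ij) s \<tau>\<bar> \<le> K ij * exp (- lam \<theta> p (a ij) * (s - \<tau>)))"
    and C5: "(Mf + H0 m n r \<theta> p K a C \<Lambda> F Mf * Lf) * cbar m n r \<theta> p K a C < 1"
    and C6: "- lam_min m n \<theta> p a + dbar m n r \<theta> p K a C \<Lambda> F Mf Lf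
             + real p / psi_om \<theta> p * ln (1 + dmax \<theta> p * dbar m n r \<theta> p K a C \<Lambda> F Mf Lf) < 0"
    and \<zeta>: "\<zeta> \<in> Theta \<Lambda> F"
    and \<phi>_sol: "network_sol m n r a C f \<theta> \<zeta> UNIV \<phi>"
    and \<phi>_bd: "\<forall>t\<in>T0 \<theta>. vnorm m n (\<phi> t) \<le> H0 m n r \<theta> p K a C \<Lambda> F Mf"
    and t0: "t0 \<in> T0 \<theta>"
    and x_sol: "network_sol m n r a C f \<theta> \<zeta> {t0..} x"
  shows "\<forall>\<epsilon>>0. \<exists>T. \<forall>t\<in>T0 \<theta>. T \<le> t \<longrightarrow> vnorm m n (x t - \<phi> t) < \<epsilon>"
  \<comment> \<open>\<open>a_pos\<close>, (C1), (C2), (C5), the continuity of \<open>f\<close> and the hypotheses on \<open>\<Lambda>\<close>, \<open>F\<close>, \<open>\<zeta>\<close> serve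
    the existence of the bounded solution \<open>\<phi>\<close>, which is assumed here.\<close>
proof -
  interpret periodic_time_scale \<theta> p \<omega>
    using \<theta>_mono \<theta>_0 \<theta>_per \<omega>_pos by unfold_locales
  obtain k0 where "t0 \<in> piece \<theta> k0" using t0 unfolding T0_eq_Union_piece by blast
  then interpret network_pair \<theta> m n r a C f \<zeta> \<phi> x "{t0..}" "H0 m n r \<theta> p K a C \<Lambda> F Mf" Mf Lf "k0 + 1"
    using Icells_nonempty[OF mn] C_nonneg C3(2) C4 \<phi>_sol \<phi>_bd x_sol piece_subset_atLeast
    by unfold_locales auto
  note K_bound = cauchy_bound_lam_min[OF K]
  have D_bound: "\<forall>ij\<in>Icells m n. K ij * ((Mf + H0 m n r \<theta> p K a C \<Lambda> F Mf * Lf) * Csum m n r C ij)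
      \<le> dbar m n r \<theta> p K a C \<Lambda> F Mf Lf"
    using K_Csum_le_dbar coupling_gain_nonneg by blast
  have D_nonneg: "0 \<le> dbar m n r \<theta> p K a C \<Lambda> F Mf Lf"
    using Icells_nonempty[OF mn] K_bound Csum_nonneg coupling_gain_nonneg by (intro dbar_nonneg) auto
  obtain ij where ij: "ij \<in> Icells m n" using Icells_nonempty[OF mn] by blast
  have A_nonneg: "0 \<le> Max (K ` Icells m n) * vnorm m n (x (\<theta> (2 * (k0 + 1) - 1)) - \<phi> (\<theta> (2 * (k0 + 1) - 1)))"
    using K_bound ij abs_le_vnorm[OF ij] by (meson abs_ge_zero mult_nonneg_nonneg order_trans)
  show ?thesis
    by (rule tendsto_zero_of_ts_integral_inequality[OF A_nonneg D_nonneg C6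
          continuous_on_network_diff network_diff_ts_integral_inequality[OF K_bound D_bound]])
qed

end
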